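(* Let $1<p<\infty$, $p'=p/(p-1)$, $m\ge1$, $d=1+m$, $0\le\alpha<2$, $\beta_1,\dots,\beta_m\ge0$, $\mathbf{A}=\mathrm{diag}(|x_1|^\alpha,|x_1|^{\beta_1},\dots,|x_1|^{\beta_m})$, and $\Omega\subseteq\mathbb{R}^d$ open with $\Omega\cap\{x_1=0\}\neq\emptyset$. If $\frac{2}{p'}\le\alpha<2$, then for every $f\in L^1_{loc}(\Omega)$ with $|\nabla_{\mathbf{A}}f|_{\mathbf{A}}\in L^p(\Omega)$ one has $\nabla_{\mathbf{A}}(f\mathbf{1}_{\Omega^\pm})=(\nabla_{\mathbf{A}}f)\mathbf{1}_{\Omega^\pm}$ with $|\nabla_{\mathbf{A}}(f\mathbf{1}_{\Omega^\pm})|_{\mathbf{A}}\in L^p(\Omega^\pm)$, and $$\mathcal{E}(f)=\mathcal{E}(f\mathbf{1}_{\Omega^+})+\mathcal{E}(f\mathbf{1}_{\Omega^-}).$$ Moreover, $\langle\mathcal{E}'(f),g\rangle=\langle\mathcal{E}'(f\mathbf{1}_{\Omega^+}),g\rangle+\langle\mathcal{E}'(f\mathbf{1}_{\Omega^-}),g\rangle$ for all $f,g\in L^1_{loc}(\Omega)$ with $|\nabla_{\mathbf{A}}f|_{\mathbf{A}},|\nabla_{\mathbf{A}}g|_{\mathbf{A}}\in L^p(\Omega)$.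
   Context: Points of $\mathbb{R}^{1+m}$ are $(x_1,y_1,\dots,y_m)$; $\Omega^+=\Omega\cap\{x_1>0\}$, $\Omega^-=\Omega\cap\{x_1<0\}$; $\mathbf{1}_S$ is the indicator of $S$. $\nabla_{\mathbf{A}}f=\mathbf{A}\nabla f$, $|\nabla_{\mathbf{A}}f|_{\mathbf{A}}^2=|x_1|^\alpha|\partial_{x_1}f|^2+\sum_j|x_1|^{\beta_j}|\partial_{y_j}f|^2$. $\mathcal{E}(f)=\frac1p\int_\Omega\big[|x_1|^\alpha|\partial_{x_1}f|^2+\sum_{j=1}^m|x_1|^{\beta_j}|\partial_{y_j}f|^2\big]^{p/2}dx$ for $f\in L^1_{loc}(\Omega)$ with $|\nabla_{\mathbf{A}}f|_{\mathbf{A}}\in L^p(\Omega)$, and $\langle\mathcal{E}'(f),g\rangle=\int_\Omega|\nabla_{\mathbf{A}}f|_{\mathbf{A}}^{p-2}\langle\nabla_{\mathbf{A}}f,\nabla g\rangle\,dx$ its directional (Gâteaux) derivative. *)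

theory Defs
  imports "HOL-Analysis.Analysis"
begin

type_synonym 'm pt = "real \<times> (real^'m)"

fun dirderiv :: "('a::real_normed_vector \<Rightarrow> real) \<Rightarrow> 'a list \<Rightarrow> 'a \<Rightarrow> real" where
  "dirderiv \<psi> [] = \<psi>"
| "dirderiv \<psi> (v # vs) = (\<lambda>x. frechet_derivative (dirderiv \<psi> vs) (at x) v)"

definition smooth_fun :: "('a::real_normed_vector \<Rightarrow> real) \<Rightarrow> bool" where
  "smooth_fun \<psi> \<longleftrightarrow> (\<forall>vs. (\<forall>x. dirderiv \<psi> vs differentiable (at x))
                            \<and> continuous_on UNIV (dirderiv \<psi> vs))"

definition test_fun :: "'a::real_normed_vector set \<Rightarrow> ('a \<Rightarrow> real) \<Rightarrow> bool" where
  "test_fun \<Omega> \<psi> \<longleftrightarrow> smooth_fun \<psi> \<and> compact (closure {x. \<psi> x \<noteq> 0})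
                     \<and> closure {x. \<psi> x \<noteq> 0} \<subseteq> \<Omega>"

definition dx1 :: "('m::finite pt \<Rightarrow> real) \<Rightarrow> 'm pt \<Rightarrow> real" where
  "dx1 \<psi> x = frechet_derivative \<psi> (at x) (1, 0)"

definition dy :: "'m::finite \<Rightarrow> ('m pt \<Rightarrow> real) \<Rightarrow> 'm pt \<Rightarrow> real" where
  "dy j \<psi> x = frechet_derivative \<psi> (at x) (0, axis j 1)"

definition loc_integrable :: "'m::finite pt set \<Rightarrow> ('m pt \<Rightarrow> real) \<Rightarrow> bool" where
  "loc_integrable \<Omega> f \<longleftrightarrow>
     (\<forall>K. compact K \<and> K \<subseteq> \<Omega> \<longrightarrow> set_integrable lebesgue K f)"

definition ind :: "'a set \<Rightarrow> 'a \<Rightarrow> real" where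
  "ind S x = (if x \<in> S then 1 else 0)"

definition Omega_plus :: "'m::finite pt set \<Rightarrow> 'm pt set" where
  "Omega_plus \<Omega> = \<Omega> \<inter> {x. fst x > 0}"

definition Omega_minus :: "'m::finite pt set \<Rightarrow> 'm pt set" where
  "Omega_minus \<Omega> = \<Omega> \<inter> {x. fst x < 0}"

text \<open>A pair D = (D1, Dy) plays the role of the gradient of f,
  so that nabla_A f = A D = (|x1|^alpha D1, (|x1|^beta_j Dy_j)_j).
  The defining identity is the weak (divergence-form) one:
  for every test function psi in C_c^infinity(Omega),
    int f d/dx1(|x1|^alpha psi) = - int |x1|^alpha D1 psi,
    int f |x1|^beta_j d/dy_j psi  = - int |x1|^beta_j Dy_j psi,
  i.e. < nabla_A f, Phi > = - int f div(A Phi) for all test vector fields Phi.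
  Here d/dx1(|x1|^alpha psi) is written out (its value on the null set x1 = 0
  is irrelevant).\<close>
definition dx1_weighted :: "real \<Rightarrow> ('m::finite pt \<Rightarrow> real) \<Rightarrow> 'm pt \<Rightarrow> real" where
  "dx1_weighted \<alpha> \<psi> x =
     \<alpha> * sgn (fst x) * \<bar>fst x\<bar> powr (\<alpha> - 1) * \<psi> x + \<bar>fst x\<bar> powr \<alpha> * dx1 \<psi> x"

definition weak_A_grad ::
  "real \<Rightarrow> ('m::finite \<Rightarrow> real) \<Rightarrow> 'm pt set \<Rightarrow> ('m pt \<Rightarrow> real)
     \<Rightarrow> ('m pt \<Rightarrow> real) \<Rightarrow> ('m pt \<Rightarrow> real^'m) \<Rightarrow> bool" where
  "weak_A_grad \<alpha> \<beta> \<Omega> f D1 Dy \<longleftrightarrow>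
     set_borel_measurable lebesgue \<Omega> D1 \<and> set_borel_measurable lebesgue \<Omega> Dy \<and>
     (\<forall>\<psi>. test_fun \<Omega> \<psi> \<longrightarrow>
        set_integrable lebesgue \<Omega> (\<lambda>x. f x * dx1_weighted \<alpha> \<psi> x) \<and>
        set_integrable lebesgue \<Omega> (\<lambda>x. \<bar>fst x\<bar> powr \<alpha> * D1 x * \<psi> x) \<and>
        (LINT x:\<Omega>|lebesgue. f x * dx1_weighted \<alpha> \<psi> x)
          = - (LINT x:\<Omega>|lebesgue. \<bar>fst x\<bar> powr \<alpha> * D1 x * \<psi> x) \<and>
        (\<forall>j. set_integrable lebesgue \<Omega> (\<lambda>x. f x * \<bar>fst x\<bar> powr \<beta> j * dy j \<psi> x) \<and>
             set_integrable lebesgue \<Omega> (\<lambda>x. \<bar>fst x\<bar> powr \<beta> j * Dy x $ j * \<psi> x) \<and>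
             (LINT x:\<Omega>|lebesgue. f x * \<bar>fst x\<bar> powr \<beta> j * dy j \<psi> x)
               = - (LINT x:\<Omega>|lebesgue. \<bar>fst x\<bar> powr \<beta> j * Dy x $ j * \<psi> x)))"

definition A_norm ::
  "real \<Rightarrow> ('m::finite \<Rightarrow> real) \<Rightarrow> ('m pt \<Rightarrow> real) \<Rightarrow> ('m pt \<Rightarrow> real^'m) \<Rightarrow> 'm pt \<Rightarrow> real" where
  "A_norm \<alpha> \<beta> D1 Dy x =
     sqrt (\<bar>fst x\<bar> powr \<alpha> * (D1 x)\<^sup>2 + (\<Sum>j\<in>UNIV. \<bar>fst x\<bar> powr \<beta> j * (Dy x $ j)\<^sup>2))"

definition A_norm_Lp ::
  "real \<Rightarrow> real \<Rightarrow> ('m::finite \<Rightarrow> real) \<Rightarrow> 'm pt set \<Rightarrow> ('m pt \<Rightarrow> real) \<Rightarrow> ('m pt \<Rightarrow> real^'m) \<Rightarrow> bool" where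
  "A_norm_Lp p \<alpha> \<beta> S D1 Dy \<longleftrightarrow>
     set_borel_measurable lebesgue S (A_norm \<alpha> \<beta> D1 Dy) \<and>
     set_integrable lebesgue S (\<lambda>x. A_norm \<alpha> \<beta> D1 Dy x powr p)"

definition energy ::
  "real \<Rightarrow> real \<Rightarrow> ('m::finite \<Rightarrow> real) \<Rightarrow> 'm pt set \<Rightarrow> ('m pt \<Rightarrow> real) \<Rightarrow> ('m pt \<Rightarrow> real^'m) \<Rightarrow> real" where
  "energy p \<alpha> \<beta> \<Omega> D1 Dy = (1 / p) * (LINT x:\<Omega>|lebesgue. A_norm \<alpha> \<beta> D1 Dy x powr p)"

text \<open><E'(f), g> = int_Omega |nabla_A f|_A^(p-2) <nabla_A f, nabla g>, where
  <A Df, Dg> = |x1|^alpha Df1 Dg1 + sum_j |x1|^beta_j Dfy_j Dgy_j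
  (with the usual convention that the integrand is 0 where nabla_A f = 0).\<close>
definition energy_deriv ::
  "real \<Rightarrow> real \<Rightarrow> ('m::finite \<Rightarrow> real) \<Rightarrow> 'm pt set \<Rightarrow> ('m pt \<Rightarrow> real) \<Rightarrow> ('m pt \<Rightarrow> real^'m)
     \<Rightarrow> ('m pt \<Rightarrow> real) \<Rightarrow> ('m pt \<Rightarrow> real^'m) \<Rightarrow> real" where
  "energy_deriv p \<alpha> \<beta> \<Omega> Df1 Dfy Dg1 Dgy =
     (LINT x:\<Omega>|lebesgue. A_norm \<alpha> \<beta> Df1 Dfy x powr (p - 2) *
        (\<bar>fst x\<bar> powr \<alpha> * Df1 x * Dg1 x + (\<Sum>j\<in>UNIV. \<bar>fst x\<bar> powr \<beta> j * Dfy x $ j * Dgy x $ j)))"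

end

theory Submission
  imports Defs "HOL-Real_Asymp.Real_Asymp"
begin

(*
  Write eta = ramp 0 for a smooth step from 0 (on ]-oo, 1]) to 1 (on [2, oo[),
  zeta = ramp alpha for the primitive of s^alpha eta'(s), and kappa(s) = s^(-alpha) zeta(s)
  (ramp_over_powr).  The weak identities for f restrict to the half-space {sigma x1 > 0} when
  tested with psi(x) theta(c x1), theta = eta - kappa (cutoff), c = n sigma, and n -> oo.
  The cut-off eta alone would leave the boundary term int f |x1|^alpha psi c eta'(c x1), about
  which nothing is known.  The correction kappa removes it: |y|^alpha kappa(c y) equals
  |c|^(-alpha) zeta(c y), so the weighted x1-derivative of psi theta(c x1) is eta(c x1) times
  that of psi minus |c|^(-alpha) zeta(c x1) times the plain x1-derivative of psi.  For
  alpha > 0 this last term vanishes in the limit by dominated convergence, f being locally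
  integrable.  For the y-identities eta alone suffices, as it commutes with the y-derivatives.
  The energy identities only use that {x1 = 0} is a null set and that
  |<A Df, Dg>| <= |nabla_A f|_A |nabla_A g|_A makes the integrand of <E'(f), g> integrable.
*)

section \<open>Smooth functions\<close>

lemma smooth_fun_coinduct:
  fixes P :: "('a::real_normed_vector \<Rightarrow> real) \<Rightarrow> bool"
  assumes "P f"
    and "\<And>g. P g \<Longrightarrow> (\<forall>x. g differentiable (at x)) \<and> (\<forall>v. P (\<lambda>x. frechet_derivative g (at x) v))"
  shows "smooth_fun f"
proof -
  have "P (dirderiv f vs)" for vs
    by (induction vs) (use assms in auto)
  then show ?thesis
    unfolding smooth_fun_def using assms(2)
    by (meson differentiable_imp_continuous_on differentiable_on_def differentiable_at_withinI)
qed

lemma smooth_fun_differentiable: "smooth_fun f \<Longrightarrow> f differentiable (at x)"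
  unfolding smooth_fun_def by (metis dirderiv.simps(1))

lemma smooth_fun_has_derivative:
  "smooth_fun f \<Longrightarrow> (f has_derivative frechet_derivative f (at x)) (at x)"
  using smooth_fun_differentiable frechet_derivative_works by blast

lemma smooth_fun_continuous_on: "smooth_fun f \<Longrightarrow> continuous_on S f"
  unfolding smooth_fun_def by (metis dirderiv.simps(1) continuous_on_subset top_greatest)

lemma dirderiv_snoc: "dirderiv \<psi> (vs @ [v]) = dirderiv (dirderiv \<psi> [v]) vs"
  by (induction vs) auto

lemma smooth_fun_frechet_derivative:
  assumes "smooth_fun f"
  shows "smooth_fun (\<lambda>x. frechet_derivative f (at x) v)"
  unfolding smooth_fun_def
proof (intro allI)
  fix vs
  have "(\<forall>x. dirderiv f (vs @ [v]) differentiable at x) \<and> continuous_on UNIV (dirderiv f (vs @ [v]))"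
    using assms unfolding smooth_fun_def by blast
  then show "(\<forall>x. dirderiv (\<lambda>x. frechet_derivative f (at x) v) vs differentiable at x) \<and>
      continuous_on UNIV (dirderiv (\<lambda>x. frechet_derivative f (at x) v) vs)"
    by (simp add: dirderiv_snoc)
qed

lemma smooth_fun_const: "smooth_fun (\<lambda>x::'a::real_normed_vector. c)"
proof (rule smooth_fun_coinduct[where P="\<lambda>g. \<exists>c. g = (\<lambda>x. c)"])
  fix g :: "'a \<Rightarrow> real"
  assume "\<exists>c. g = (\<lambda>x. c)"
  then obtain c where g: "g = (\<lambda>x. c)" by blast
  have "frechet_derivative g (at x) = (\<lambda>v. 0)" for x
    using frechet_derivative_at[OF has_derivative_const[of c "at x"]] g by simp
  then show "(\<forall>x. g differentiable at x) \<and> (\<forall>v. \<exists>c. (\<lambda>x. frechet_derivative g (at x) v) = (\<lambda>x. c))"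
    using g by auto
qed auto

fun sum_of_products :: "(('a \<Rightarrow> real) \<times> ('a \<Rightarrow> real)) list \<Rightarrow> 'a \<Rightarrow> real" where
  "sum_of_products [] x = 0"
| "sum_of_products ((a, b) # L) x = a x * b x + sum_of_products L x"

fun product_rule_terms :: "'a::real_normed_vector \<Rightarrow> (('a \<Rightarrow> real) \<times> ('a \<Rightarrow> real)) list
    \<Rightarrow> (('a \<Rightarrow> real) \<times> ('a \<Rightarrow> real)) list"
where
  "product_rule_terms v [] = []"
| "product_rule_terms v ((a, b) # L) =
     (a, \<lambda>x. frechet_derivative b (at x) v) # (\<lambda>x. frechet_derivative a (at x) v, b)
       # product_rule_terms v L"

lemma has_derivative_sum_of_products:
  assumes "\<forall>(a, b) \<in> set L. smooth_fun a \<and> smooth_fun b"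
  shows "(sum_of_products L has_derivative (\<lambda>v. sum_of_products (product_rule_terms v L) x)) (at x)"
  using assms
proof (induction L)
  case Nil
  then show ?case by simp
next
  case (Cons p L)
  obtain a b where p: "p = (a, b)" by force
  have a: "smooth_fun a" and b: "smooth_fun b" using Cons.prems p by auto
  have "((\<lambda>x. a x * b x) has_derivative
      (\<lambda>v. a x * frechet_derivative b (at x) v + frechet_derivative a (at x) v * b x)) (at x)"
    using has_derivative_mult[OF smooth_fun_has_derivative[OF a] smooth_fun_has_derivative[OF b]] by simp
  from has_derivative_add[OF this Cons.IH] show ?case
    using Cons.prems p by (simp add: add.assoc)
qed

lemma smooth_fun_sum_of_products:
  assumes "\<forall>(a, b) \<in> set L. smooth_fun a \<and> smooth_fun b"
  shows "smooth_fun (sum_of_products L)"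
proof (rule smooth_fun_coinduct[where
      P="\<lambda>g. \<exists>L. (\<forall>(a, b) \<in> set L. smooth_fun a \<and> smooth_fun b) \<and> g = sum_of_products L"])
  fix g :: "'a \<Rightarrow> real"
  assume "\<exists>L. (\<forall>(a, b) \<in> set L. smooth_fun a \<and> smooth_fun b) \<and> g = sum_of_products L"
  then obtain L where L: "\<forall>(a, b) \<in> set L. smooth_fun a \<and> smooth_fun b" and g: "g = sum_of_products L"
    by blast
  have D: "(g has_derivative (\<lambda>v. sum_of_products (product_rule_terms v L) x)) (at x)" for x
    using has_derivative_sum_of_products[OF L] g by simp
  have "\<forall>(a, b) \<in> set (product_rule_terms v L). smooth_fun a \<and> smooth_fun b" for v
    using L by (induction v L rule: product_rule_terms.induct) (auto simp: smooth_fun_frechet_derivative)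
  moreover have "(\<lambda>x. frechet_derivative g (at x) v) = sum_of_products (product_rule_terms v L)" for v
    using frechet_derivative_at[OF D] by (auto simp: fun_eq_iff)
  ultimately show "(\<forall>x. g differentiable at x) \<and>
      (\<forall>v. \<exists>L. (\<forall>(a, b) \<in> set L. smooth_fun a \<and> smooth_fun b)
             \<and> (\<lambda>x. frechet_derivative g (at x) v) = sum_of_products L)"
    using D unfolding differentiable_def by blast
qed (use assms in blast)

lemma smooth_fun_mult:
  assumes "smooth_fun a" "smooth_fun b"
  shows "smooth_fun (\<lambda>x. a x * b x)"
proof -
  have "sum_of_products [(a, b)] = (\<lambda>x. a x * b x)" by auto
  then show ?thesis using smooth_fun_sum_of_products[of "[(a, b)]"] assms by simp
qed

lemma smooth_fun_diff:
  assumes "smooth_fun a" "smooth_fun b"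
  shows "smooth_fun (\<lambda>x. a x - b x)"
proof -
  have "smooth_fun (sum_of_products [(a, \<lambda>_. 1), (b, \<lambda>_. - 1)])"
    by (rule smooth_fun_sum_of_products) (simp add: assms smooth_fun_const)
  moreover have "sum_of_products [(a, \<lambda>_. 1), (b, \<lambda>_. - 1)] = (\<lambda>x. a x - b x)" by auto
  ultimately show ?thesis by simp
qed

lemma smooth_fun_compose_affine:
  fixes \<theta> :: "'b::real_normed_vector \<Rightarrow> real" and L :: "'a::real_normed_vector \<Rightarrow> 'b"
  assumes "smooth_fun \<theta>" "bounded_linear L"
  shows "smooth_fun (\<lambda>x. \<theta> (L x + c))"
proof (rule smooth_fun_coinduct[where P="\<lambda>g. \<exists>\<theta>. smooth_fun \<theta> \<and> g = (\<lambda>x. \<theta> (L x + c))"])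
  fix g
  assume "\<exists>\<theta>. smooth_fun \<theta> \<and> g = (\<lambda>x. \<theta> (L x + c))"
  then obtain \<theta> where \<theta>: "smooth_fun \<theta>" and g: "g = (\<lambda>x. \<theta> (L x + c))" by blast
  have inner: "((\<lambda>x. L x + c) has_derivative L) (at x)" for x
    using has_derivative_add_const[OF bounded_linear_imp_has_derivative[OF assms(2)]] by simp
  have D: "(g has_derivative (\<lambda>v. frechet_derivative \<theta> (at (L x + c)) (L v))) (at x)" for x
    unfolding g using has_derivative_compose[OF inner smooth_fun_has_derivative[OF \<theta>]] by (simp add: o_def)
  have "(\<lambda>x. frechet_derivative g (at x) v) = (\<lambda>x. (\<lambda>y. frechet_derivative \<theta> (at y) (L v)) (L x + c))"
    for v using frechet_derivative_at[OF D] by (auto simp: fun_eq_iff)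
  then show "(\<forall>x. g differentiable at x) \<and>
      (\<forall>v. \<exists>\<theta>. smooth_fun \<theta> \<and> (\<lambda>x. frechet_derivative g (at x) v) = (\<lambda>x. \<theta> (L x + c)))"
    using D smooth_fun_frechet_derivative[OF \<theta>] unfolding differentiable_def by blast
qed (use assms(1) in blast)

lemma smooth_fun_real_has_deriv:
  fixes f :: "real \<Rightarrow> real"
  assumes "smooth_fun f"
  shows "(f has_real_derivative deriv f x) (at x)"
  using smooth_fun_differentiable[OF assms] DERIV_deriv_iff_real_differentiable by blast

lemma smooth_fun_deriv:
  fixes f :: "real \<Rightarrow> real"
  assumes "smooth_fun f"
  shows "smooth_fun (deriv f)"
proof -
  have "frechet_derivative f (at x) = (\<lambda>v. deriv f x * v)" for x
    by (rule frechet_derivative_at[symmetric])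
      (use smooth_fun_real_has_deriv[OF assms] in \<open>simp add: has_field_derivative_def\<close>)
  then have "deriv f = (\<lambda>x. frechet_derivative f (at x) 1)" by simp
  then show ?thesis using smooth_fun_frechet_derivative[OF assms] by simp
qed

definition lin_comb :: "(real \<times> ('a \<Rightarrow> real)) list \<Rightarrow> 'a \<Rightarrow> real" where
  "lin_comb L x = (\<Sum>(c, k)\<leftarrow>L. c * k x)"

lemma lin_comb_append: "lin_comb (L @ M) x = lin_comb L x + lin_comb M x"
  by (simp add: lin_comb_def)

lemma lin_comb_scale: "lin_comb (map (\<lambda>(c, k). (a * c, k)) L) x = a * lin_comb L x"
  by (induction L) (auto simp: lin_comb_def algebra_simps)

lemma has_real_derivative_lin_comb:
  assumes "\<And>c k x. (c, k) \<in> set L \<Longrightarrow> (k has_real_derivative lin_comb (D k) x) (at x)"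
  shows "(lin_comb L has_real_derivative
      lin_comb (concat (map (\<lambda>(c, k). map (\<lambda>(c', k'). (c * c', k')) (D k)) L)) x) (at x)"
  using assms
proof (induction L)
  case Nil
  then show ?case by (simp add: lin_comb_def)
next
  case (Cons p L)
  obtain c k where p: "p = (c, k)" by fastforce
  have "((\<lambda>x. c * k x + lin_comb L x) has_real_derivative
      c * lin_comb (D k) x + lin_comb (concat (map (\<lambda>(c, k). map (\<lambda>(c', k'). (c * c', k')) (D k)) L)) x)
      (at x)"
    using Cons by (intro DERIV_add DERIV_cmult) (auto simp: p)
  moreover have "lin_comb (p # L) = (\<lambda>x. c * k x + lin_comb L x)"
    by (simp add: p lin_comb_def fun_eq_iff)
  ultimately show ?case
    by (simp add: p lin_comb_append lin_comb_scale)
qed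

lemma smooth_fun_real_coinduct:
  fixes F :: "(real \<Rightarrow> real) set"
  assumes "f \<in> F"
    and "\<And>h. h \<in> F \<Longrightarrow> \<exists>L. snd ` set L \<subseteq> F \<and> (\<forall>x. (h has_real_derivative lin_comb L x) (at x))"
  shows "smooth_fun f"
proof -
  obtain D where D_in: "\<And>h. h \<in> F \<Longrightarrow> snd ` set (D h) \<subseteq> F"
    and D: "\<And>h x. h \<in> F \<Longrightarrow> (h has_real_derivative lin_comb (D h) x) (at x)"
    using assms(2) by metis
  define D' where "D' L = concat (map (\<lambda>(c, k). map (\<lambda>(c', k'). (c * c', k')) (D k)) L)" for L
  have D'_in: "snd ` set (D' L) \<subseteq> F" if "snd ` set L \<subseteq> F" for L
    using that D_in by (fastforce simp: D'_def)
  have D': "(lin_comb L has_real_derivative lin_comb (D' L) x) (at x)" if "snd ` set L \<subseteq> F" for L x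
    unfolding D'_def using that by (intro has_real_derivative_lin_comb D) force
  show ?thesis
  proof (rule smooth_fun_coinduct[where P="\<lambda>g. \<exists>L. snd ` set L \<subseteq> F \<and> g = lin_comb L"])
    show "\<exists>L. snd ` set L \<subseteq> F \<and> f = lin_comb L"
      using assms(1) by (intro exI[of _ "[(1, f)]"]) (auto simp: lin_comb_def)
  next
    fix g
    assume "\<exists>L. snd ` set L \<subseteq> F \<and> g = lin_comb L"
    then obtain L where L: "snd ` set L \<subseteq> F" and g: "g = lin_comb L" by blast
    have gD: "(g has_derivative (\<lambda>v. lin_comb (D' L) x * v)) (at x)" for x
      using D'[OF L, of x] unfolding g has_field_derivative_def .
    have "frechet_derivative g (at x) v = lin_comb (map (\<lambda>(c, k). (v * c, k)) (D' L)) x" for v x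
    proof -
      have "frechet_derivative g (at x) v = lin_comb (D' L) x * v"
        by (simp flip: frechet_derivative_at[OF gD])
      also have "\<dots> = v * lin_comb (D' L) x" by (rule mult.commute)
      finally show ?thesis by (simp only: lin_comb_scale)
    qed
    then have "(\<lambda>x. frechet_derivative g (at x) v) = lin_comb (map (\<lambda>(c, k). (v * c, k)) (D' L))" for v
      by (simp add: fun_eq_iff)
    moreover have "snd ` set (map (\<lambda>(c, k). (v * c, k)) (D' L)) \<subseteq> F" for v
      using D'_in[OF L] by force
    ultimately show "(\<forall>x. g differentiable at x) \<and>
        (\<forall>v. \<exists>L. snd ` set L \<subseteq> F \<and> (\<lambda>x. frechet_derivative g (at x) v) = lin_comb L)"
      using gD unfolding differentiable_def by blast
  qed
qed

lemma smooth_fun_antiderivative: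
  fixes H h :: "real \<Rightarrow> real"
  assumes "smooth_fun h" "\<And>x. (H has_real_derivative h x) (at x)"
  shows "smooth_fun H"
proof (rule smooth_fun_real_coinduct[where F="insert H (Collect smooth_fun)"])
  fix g
  assume "g \<in> insert H (Collect smooth_fun)"
  then show "\<exists>L. snd ` set L \<subseteq> insert H (Collect smooth_fun) \<and>
      (\<forall>x. (g has_real_derivative lin_comb L x) (at x))"
  proof
    assume "g = H"
    then show ?thesis using assms by (intro exI[of _ "[(1, h)]"]) (auto simp: lin_comb_def)
  next
    assume "g \<in> Collect smooth_fun"
    then show ?thesis
      by (intro exI[of _ "[(1, deriv g)]"]) (auto simp: lin_comb_def smooth_fun_deriv smooth_fun_real_has_deriv)
  qed
qed simp

section \<open>Smooth ramps and the cut-off function\<close>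

definition flat_pow :: "real \<Rightarrow> real \<Rightarrow> real" where
  "flat_pow r x = (if 0 < x then x powr r * exp (- 1 / x) else 0)"

lemma flat_pow_has_real_derivative:
  "(flat_pow r has_real_derivative (r * flat_pow (r - 1) x + flat_pow (r - 2) x)) (at x)"
proof (cases "0 < x")
  case True
  have "x powr (r - 2) = x powr r / x\<^sup>2"
    using True by (simp add: powr_diff powr_numeral)
  then have "((\<lambda>x. x powr r * exp (- 1 / x)) has_real_derivative
      r * x powr (r - 1) * exp (- 1 / x) + x powr (r - 2) * exp (- 1 / x)) (at x)"
    using True by (auto intro!: derivative_eq_intros simp: power2_eq_square field_simps)
  then have "((\<lambda>x. x powr r * exp (- 1 / x)) has_real_derivative
      r * flat_pow (r - 1) x + flat_pow (r - 2) x) (at x)"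
    using True by (simp add: flat_pow_def mult.assoc)
  then show ?thesis
    by (rule has_field_derivative_transform_within_open[where S="{0<..}"])
      (use True in \<open>auto simp: flat_pow_def\<close>)
next
  case False
  show ?thesis
  proof (cases "x < 0")
    case True
    show ?thesis
      by (rule has_field_derivative_transform_within_open[where S="{..<0}" and f="\<lambda>_. 0"])
        (use True in \<open>auto simp: flat_pow_def\<close>)
  next
    case False
    with \<open>\<not> 0 < x\<close> have x: "x = 0" by simp
    have "((\<lambda>h. h powr (r - 1) * exp (- 1 / h)) \<longlongrightarrow> 0) (at_right 0)"
      by real_asymp
    moreover have "\<forall>\<^sub>F h in at_right 0. h powr (r - 1) * exp (- 1 / h) = (flat_pow r h - flat_pow r 0) / h"
      by (rule eventually_at_rightI[of 0 1]) (auto simp: flat_pow_def powr_diff)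
    ultimately have "((\<lambda>h. (flat_pow r h - flat_pow r 0) / h) \<longlongrightarrow> 0) (at_right 0)"
      by (rule Lim_transform_eventually)
    moreover have "((\<lambda>h. (flat_pow r h - flat_pow r 0) / h) \<longlongrightarrow> 0) (at_left 0)"
      by (rule Lim_transform_eventually[OF tendsto_const], rule eventually_at_leftI[of "-1"])
        (auto simp: flat_pow_def)
    ultimately have "(flat_pow r has_real_derivative 0) (at 0)"
      unfolding DERIV_def by (simp add: filterlim_split_at)
    then show ?thesis using x by (simp add: flat_pow_def)
  qed
qed

lemma smooth_fun_flat_pow: "smooth_fun (flat_pow r)"
proof (rule smooth_fun_real_coinduct[where F="range flat_pow"])
  fix h
  assume "h \<in> range flat_pow"
  then obtain r where "h = flat_pow r" by blast
  then show "\<exists>L. snd ` set L \<subseteq> range flat_pow \<and>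
      (\<forall>x. (h has_real_derivative lin_comb L x) (at x))"
    using flat_pow_has_real_derivative
    by (intro exI[of _ "[(r, flat_pow (r - 1)), (1, flat_pow (r - 2))]"]) (auto simp: lin_comb_def)
qed simp

lemma has_real_derivative_zero_if_vanishing_below:
  fixes f :: "real \<Rightarrow> real"
  assumes "\<And>y. y < a \<Longrightarrow> f y = 0" "x < a"
  shows "(f has_real_derivative 0) (at x)"
  by (rule has_field_derivative_transform_within_open[where S="{..<a}" and f="\<lambda>_. 0"])
    (use assms in auto)

lemma powr_mult_has_real_derivative:
  fixes f :: "real \<Rightarrow> real"
  assumes f: "(f has_real_derivative f') (at x)"
    and a: "0 < a" and vanish: "\<And>y. y < a \<Longrightarrow> f y = 0"
  shows "((\<lambda>y. y powr r * f y) has_real_derivative (r * x powr (r - 1) * f x + x powr r * f')) (at x)"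
proof (cases "0 < x")
  case True
  then show ?thesis
    using DERIV_mult[OF has_real_derivative_powr[OF True] f] by (simp add: algebra_simps)
next
  case False
  then have "x < a" using a by simp
  have "(f has_real_derivative 0) (at x)"
    by (rule has_real_derivative_zero_if_vanishing_below[OF vanish \<open>x < a\<close>])
  then have "f' = 0" using DERIV_unique f by blast
  moreover have "((\<lambda>y. y powr r * f y) has_real_derivative 0) (at x)"
    by (rule has_real_derivative_zero_if_vanishing_below[OF _ \<open>x < a\<close>]) (simp add: vanish)
  ultimately show ?thesis using vanish[OF \<open>x < a\<close>] by simp
qed

lemma smooth_fun_powr_mult:
  fixes f :: "real \<Rightarrow> real"
  assumes "smooth_fun f" "0 < a" "\<And>y. y < a \<Longrightarrow> f y = 0"
  shows "smooth_fun (\<lambda>y. y powr r * f y)"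
proof (rule smooth_fun_real_coinduct[where
      F="{\<lambda>y. y powr r * f y | r f. smooth_fun f \<and> (\<forall>y<a. f y = 0)}"])
  fix h
  assume "h \<in> {\<lambda>y. y powr r * f y | r f. smooth_fun f \<and> (\<forall>y<a. f y = 0)}"
  then obtain r f where h: "h = (\<lambda>y. y powr r * f y)" and f: "smooth_fun f" "\<forall>y<a. f y = 0"
    by blast
  have "deriv f y = 0" if "y < a" for y
    using has_real_derivative_zero_if_vanishing_below[OF _ that] f(2) DERIV_imp_deriv by blast
  then have "smooth_fun (deriv f) \<and> (\<forall>y<a. deriv f y = 0)"
    using smooth_fun_deriv[OF f(1)] by blast
  moreover have "(h has_real_derivative
      (r * (x powr (r - 1) * f x) + 1 * (x powr r * deriv f x))) (at x)" for x
    using powr_mult_has_real_derivative[OF smooth_fun_real_has_deriv[OF f(1)] \<open>0 < a\<close>] f(2) h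
    by (simp add: algebra_simps)
  ultimately show "\<exists>L. snd ` set L \<subseteq> {\<lambda>y. y powr r * f y | r f. smooth_fun f \<and> (\<forall>y<a. f y = 0)} \<and>
      (\<forall>x. (h has_real_derivative lin_comb L x) (at x))"
    using f by (intro exI[of _ "[(r, \<lambda>y. y powr (r - 1) * f y), (1, \<lambda>y. y powr r * deriv f y)]"])
      (auto simp: lin_comb_def)
qed (use assms in blast)

lemma integral_from_0_of_supported:
  fixes g :: "real \<Rightarrow> real"
  assumes cont: "continuous_on UNIV g" and nonneg: "\<And>s. 0 \<le> g s"
    and supp: "\<And>s. s \<le> 1 \<or> 2 \<le> s \<Longrightarrow> g s = 0"
  shows "((\<lambda>s. integral {0..s} g) has_real_derivative g s) (at s)"
    and "s \<le> 1 \<Longrightarrow> integral {0..s} g = 0"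
    and "2 \<le> s \<Longrightarrow> integral {0..s} g = integral {0..2} g"
    and "0 \<le> integral {0..s} g"
    and "integral {0..s} g \<le> integral {0..2} g"
proof -
  have int: "g integrable_on {a..b}" for a b
    by (rule integrable_continuous_interval) (rule continuous_on_subset[OF cont], simp)
  have below: "integral {0..s} g = 0" if "s \<le> 1" for s
  proof -
    have "integral {0..s} g = integral {0..s} (\<lambda>_. 0)"
      by (rule integral_cong) (use that supp in auto)
    then show ?thesis by simp
  qed
  then show "s \<le> 1 \<Longrightarrow> integral {0..s} g = 0" .
  have split: "integral {0..s} g = integral {0..t} g + integral {t..s} g" if "0 \<le> t" "t \<le> s" for s t
    using Henstock_Kurzweil_Integration.integral_combine[OF that int] by simp
  have above: "integral {0..s} g = integral {0..2} g" if "2 \<le> s" for s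
  proof -
    have "integral {2..s} g = integral {2..s} (\<lambda>_. 0)"
      by (rule integral_cong) (use supp in auto)
    then show ?thesis using split[of 2 s] that by simp
  qed
  then show "2 \<le> s \<Longrightarrow> integral {0..s} g = integral {0..2} g" .
  have nonneg_on: "0 \<le> integral {t..s} g" for s t
    by (rule integral_nonneg[OF int nonneg])
  then show "0 \<le> integral {0..s} g" .
  show "integral {0..s} g \<le> integral {0..2} g"
  proof (cases "s \<le> 1")
    case True
    then show ?thesis using below[OF True] nonneg_on[of 0 2] by simp
  next
    case False
    show ?thesis
    proof (cases "s \<le> 2")
      case True
      then show ?thesis using split[of s 2] False nonneg_on[of s 2] by linarith
    qed (use above[of s] in simp)
  qed
  show "((\<lambda>s. integral {0..s} g) has_real_derivative g s) (at s)"
  proof (cases "s < 1")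
    case True
    show ?thesis
      by (rule has_field_derivative_transform_within_open[where S="{..<1}" and f="\<lambda>_. 0"])
        (use True supp below in auto)
  next
    case False
    have "((\<lambda>x. integral {0..x} g) has_real_derivative g s) (at s within {0..s+1})"
      by (rule integral_has_real_derivative) (use False continuous_on_subset[OF cont] in auto)
    moreover have "at s within {0..s+1} = at s"
      by (rule at_within_interior) (use False in auto)
    ultimately show ?thesis by simp
  qed
qed

definition bump :: "real \<Rightarrow> real" where
  "bump s = flat_pow 0 (s - 1) * flat_pow 0 (2 - s)"

lemma bump_nonneg: "0 \<le> bump s"
  by (simp add: bump_def flat_pow_def)

lemma bump_eq_0: "s \<le> 1 \<or> 2 \<le> s \<Longrightarrow> bump s = 0"
  by (auto simp: bump_def flat_pow_def)

lemma smooth_fun_bump: "smooth_fun bump"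
proof -
  have "smooth_fun (\<lambda>s. flat_pow 0 (s + -1))"
    by (rule smooth_fun_compose_affine[OF smooth_fun_flat_pow bounded_linear_ident])
  moreover have "smooth_fun (\<lambda>s. flat_pow 0 (- s + 2))"
    by (rule smooth_fun_compose_affine[OF smooth_fun_flat_pow bounded_linear_minus[OF bounded_linear_ident]])
  ultimately have "smooth_fun (\<lambda>s. flat_pow 0 (s + -1) * flat_pow 0 (- s + 2))"
    by (rule smooth_fun_mult)
  then show ?thesis
    unfolding bump_def by simp
qed

lemma bump_mass_pos: "0 < integral {0..2} bump"
proof -
  have cont: "continuous_on {0..2} bump"
    using smooth_fun_continuous_on[OF smooth_fun_bump] .
  have "0 \<le> integral {0..2} bump"
    using integral_from_0_of_supported(4)[OF smooth_fun_continuous_on[OF smooth_fun_bump] bump_nonneg bump_eq_0] .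
  moreover have "integral {0..2} bump \<noteq> 0"
  proof
    assume "integral {0..2} bump = 0"
    then have "(bump has_integral 0) (cbox 0 2)"
      using integrable_integral[OF integrable_continuous_interval[OF cont]] by simp
    then have "bump (3/2) = 0"
      using cont bump_nonneg by (intro has_integral_0_cbox_imp_0[of 0 2 bump]) auto
    then show False by (simp add: bump_def flat_pow_def)
  qed
  ultimately show ?thesis by simp
qed

definition ramp :: "real \<Rightarrow> real \<Rightarrow> real" where
  "ramp a s = integral {0..s} (\<lambda>\<tau>. \<tau> powr a * bump \<tau>) / integral {0..2} bump"

lemma smooth_fun_powr_mult_bump: "smooth_fun (\<lambda>\<tau>. \<tau> powr a * bump \<tau>)"
  by (rule smooth_fun_powr_mult[OF smooth_fun_bump, of 1]) (auto simp: bump_eq_0)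

lemma
  shows ramp_has_real_derivative:
      "(ramp a has_real_derivative s powr a * bump s / integral {0..2} bump) (at s)"
    and ramp_eq_0: "s \<le> 1 \<Longrightarrow> ramp a s = 0"
    and ramp_eq_ramp_2: "2 \<le> s \<Longrightarrow> ramp a s = ramp a 2"
    and ramp_nonneg: "0 \<le> ramp a s"
    and ramp_le_ramp_2: "ramp a s \<le> ramp a 2"
proof -
  have "0 \<le> \<tau> powr a * bump \<tau>" "\<tau> \<le> 1 \<or> 2 \<le> \<tau> \<Longrightarrow> \<tau> powr a * bump \<tau> = 0" for \<tau>
    by (simp_all add: bump_nonneg bump_eq_0)
  note F = integral_from_0_of_supported[OF smooth_fun_continuous_on[OF smooth_fun_powr_mult_bump] this]
  have "((\<lambda>s. integral {0..s} (\<lambda>\<tau>. \<tau> powr a * bump \<tau>) / integral {0..2} bump) has_real_derivative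
      s powr a * bump s / integral {0..2} bump) (at s)"
    by (rule DERIV_cdivide[OF F(1)])
  then show "(ramp a has_real_derivative s powr a * bump s / integral {0..2} bump) (at s)"
    by (simp add: ramp_def[abs_def])
  show "s \<le> 1 \<Longrightarrow> ramp a s = 0"
    by (simp add: ramp_def F(2))
  show "2 \<le> s \<Longrightarrow> ramp a s = ramp a 2"
    using F(3)[of s] by (simp add: ramp_def)
  show "0 \<le> ramp a s" "ramp a s \<le> ramp a 2"
    using F(4,5) bump_mass_pos by (simp_all add: ramp_def divide_right_mono)
qed

lemma ramp_0_2: "ramp 0 2 = 1"
proof -
  have "integral {0..2} (\<lambda>\<tau>. \<tau> powr 0 * bump \<tau>) = integral {0..2} bump"
    by (rule integral_cong) (auto simp: bump_eq_0)
  then show ?thesis using bump_mass_pos by (simp add: ramp_def)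
qed

lemma ramp_0_eq_1: "2 \<le> s \<Longrightarrow> ramp 0 s = 1"
  using ramp_eq_ramp_2[of s 0] by (simp add: ramp_0_2)

lemma deriv_ramp_0: "deriv (ramp 0) s = bump s / integral {0..2} bump"
proof -
  have "s powr 0 * bump s = bump s" by (auto simp: bump_eq_0)
  then show ?thesis using DERIV_imp_deriv[OF ramp_has_real_derivative[of 0 s]] by simp
qed

lemma smooth_fun_ramp: "smooth_fun (ramp a)"
proof (rule smooth_fun_antiderivative[OF _ ramp_has_real_derivative])
  show "smooth_fun (\<lambda>s. s powr a * bump s / integral {0..2} bump)"
    using smooth_fun_mult[OF smooth_fun_powr_mult_bump smooth_fun_const[of "1 / integral {0..2} bump"]]
    by simp
qed

lemma abs_ramp_le: "\<bar>ramp a s\<bar> \<le> ramp a 2"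
  using ramp_nonneg ramp_le_ramp_2 by simp

definition ramp_over_powr :: "real \<Rightarrow> real \<Rightarrow> real" where
  "ramp_over_powr a s = s powr (- a) * ramp a s"

lemma smooth_fun_ramp_over_powr: "smooth_fun (ramp_over_powr a)"
  unfolding ramp_over_powr_def[abs_def]
  by (rule smooth_fun_powr_mult[OF smooth_fun_ramp, of 1]) (simp_all add: ramp_eq_0)

lemma deriv_ramp_over_powr:
  "deriv (ramp_over_powr a) s = - a * s powr (- a - 1) * ramp a s + deriv (ramp 0) s"
proof -
  have "\<And>y. y < 1 \<Longrightarrow> ramp a y = 0" by (simp add: ramp_eq_0)
  then have "(ramp_over_powr a has_real_derivative - a * s powr (- a - 1) * ramp a s
      + s powr (- a) * (s powr a * bump s / integral {0..2} bump)) (at s)"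
    unfolding ramp_over_powr_def[abs_def]
    by (rule powr_mult_has_real_derivative[OF ramp_has_real_derivative zero_less_one])
  moreover have "s powr (- a) * (s powr a * bump s / integral {0..2} bump) = deriv (ramp 0) s"
    by (cases "0 < s") (simp_all add: powr_add[symmetric] bump_eq_0 deriv_ramp_0)
  ultimately show ?thesis by (simp add: DERIV_imp_deriv)
qed

lemma weight_mult_ramp_over_powr:
  assumes "c \<noteq> 0"
  shows "\<bar>y\<bar> powr a * ramp_over_powr a (c * y) = \<bar>c\<bar> powr (- a) * ramp a (c * y)"
proof (cases "c * y \<le> 1")
  case True
  then show ?thesis by (simp add: ramp_over_powr_def ramp_eq_0)
next
  case False
  then have s: "0 < c * y" by simp
  have "\<bar>c\<bar> * \<bar>y\<bar> = c * y"
    using s by (metis abs_mult abs_of_pos)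
  then have "\<bar>y\<bar> = (c * y) / \<bar>c\<bar>"
    using assms by (simp add: field_simps)
  then have "\<bar>y\<bar> powr a = (c * y) powr a / \<bar>c\<bar> powr a"
    using s by (simp add: powr_divide)
  then have "\<bar>y\<bar> powr a * (c * y) powr (- a) = \<bar>c\<bar> powr (- a)"
    using s by (auto simp: powr_minus field_simps)
  then show ?thesis
    by (metis ramp_over_powr_def mult.assoc)
qed

(* For y \<noteq> 0 this is the derivative in y of both sides of weight_mult_ramp_over_powr. *)
lemma weight_ramp_over_powr_deriv:
  assumes "c \<noteq> 0"
  shows "a * sgn y * \<bar>y\<bar> powr (a - 1) * ramp_over_powr a (c * y)
      + \<bar>y\<bar> powr a * deriv (ramp_over_powr a) (c * y) * c
    = \<bar>y\<bar> powr a * deriv (ramp 0) (c * y) * c"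
proof -
  have "sgn y * \<bar>y\<bar> powr (a - 1) * (c * y) powr (- a) * ramp a (c * y)
      = \<bar>y\<bar> powr a * (c * y) powr (- a - 1) * ramp a (c * y) * c"
  proof (cases "c * y \<le> 1")
    case True
    then show ?thesis by (simp add: ramp_eq_0)
  next
    case False
    then have s: "0 < c * y" and "y \<noteq> 0" by auto
    have "\<bar>y\<bar> * c / (c * y) = sgn y"
      using \<open>y \<noteq> 0\<close> assms by (simp add: sgn_if)
    moreover have "\<bar>y\<bar> powr a = \<bar>y\<bar> powr (a - 1) * \<bar>y\<bar>"
      using \<open>y \<noteq> 0\<close> by (simp add: powr_diff)
    moreover have "(c * y) powr (- a - 1) = (c * y) powr (- a) / (c * y)"
      using s by (simp add: powr_diff)
    ultimately show ?thesis using assms \<open>y \<noteq> 0\<close> by (simp add: field_simps)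
  qed
  then show ?thesis
    by (simp add: deriv_ramp_over_powr ramp_over_powr_def algebra_simps)
qed

lemma abs_ramp_over_powr_le:
  assumes "0 \<le> a"
  shows "\<bar>ramp_over_powr a s\<bar> \<le> ramp a 2"
proof (cases "s \<le> 1")
  case True
  then show ?thesis using ramp_nonneg[of a 2] by (simp add: ramp_over_powr_def ramp_eq_0)
next
  case False
  then have "s powr (- a) \<le> s powr 0"
    using assms by (intro powr_mono) auto
  then have "s powr (- a) * ramp a s \<le> 1 * ramp a 2"
    using False ramp_nonneg[of a s] ramp_le_ramp_2[of a s] by (intro mult_mono) auto
  then show ?thesis using ramp_nonneg[of a s] by (simp add: ramp_over_powr_def)
qed

definition cutoff :: "real \<Rightarrow> real \<Rightarrow> real" where
  "cutoff a s = ramp 0 s - ramp_over_powr a s"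

lemma smooth_fun_cutoff: "smooth_fun (cutoff a)"
  unfolding cutoff_def[abs_def] by (rule smooth_fun_diff[OF smooth_fun_ramp smooth_fun_ramp_over_powr])

lemma abs_cutoff_le: "0 \<le> a \<Longrightarrow> \<bar>cutoff a s\<bar> \<le> 1 + ramp a 2"
  using abs_ramp_over_powr_le[of a s] ramp_nonneg[of 0 s] ramp_le_ramp_2[of 0 s]
  by (simp add: cutoff_def ramp_0_2 abs_le_iff)

lemma Suc_powr_neg_tendsto_0: "0 < a \<Longrightarrow> (\<lambda>n. real (Suc n) powr (- a)) \<longlonglongrightarrow> 0"
  by real_asymp

lemma abs_Suc_powr_neg_mult_ramp_le:
  assumes "0 \<le> a"
  shows "\<bar>real (Suc n) powr (- a) * ramp a s\<bar> \<le> ramp a 2"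
proof -
  have "real (Suc n) powr (- a) \<le> real (Suc n) powr 0"
    using assms by (intro powr_mono) auto
  then have "real (Suc n) powr (- a) * ramp a s \<le> 1 * ramp a 2"
    using ramp_nonneg ramp_le_ramp_2 by (intro mult_mono) auto
  then show ?thesis using ramp_nonneg[of a s] by (simp add: abs_mult)
qed

lemma ramp_0_tendsto: "(\<lambda>n. ramp 0 (real (Suc n) * y)) \<longlonglongrightarrow> (if 0 < y then 1 else 0)"
proof (cases "0 < y")
  case True
  obtain N :: nat where N: "2 / y < real N" using reals_Archimedean2 by blast
  have "ramp 0 (real (Suc n) * y) = 1" if "N \<le> n" for n
  proof -
    have "2 / y < real (Suc n)" using N that by linarith
    then have "2 \<le> real (Suc n) * y" using True by (simp add: field_simps)
    then show ?thesis by (rule ramp_0_eq_1)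
  qed
  then have "\<forall>\<^sub>F n in sequentially. ramp 0 (real (Suc n) * y) = 1"
    unfolding eventually_sequentially by blast
  then show ?thesis using True by (simp add: tendsto_eventually)
next
  case False
  then have "real (Suc n) * y \<le> 1" for n
    using mult_nonneg_nonpos[of "real (Suc n)" y] by linarith
  then show ?thesis using False by (simp add: ramp_eq_0)
qed

lemma Suc_powr_neg_mult_ramp_tendsto_0:
  assumes "0 < a"
  shows "(\<lambda>n. real (Suc n) powr (- a) * ramp a (real (Suc n) * y)) \<longlonglongrightarrow> 0"
proof -
  have "\<forall>n. norm (real (Suc n) powr (- a) * ramp a (real (Suc n) * y)) \<le> real (Suc n) powr (- a) * ramp a 2"
    using ramp_nonneg[of a] ramp_le_ramp_2[of a] by (simp add: mult_left_mono)
  moreover have "(\<lambda>n. real (Suc n) powr (- a) * ramp a 2) \<longlonglongrightarrow> 0"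
    using tendsto_mult_left_zero[OF Suc_powr_neg_tendsto_0[OF assms]] .
  ultimately show ?thesis
    by (rule Lim_null_comparison[OF always_eventually])
qed

lemma ramp_over_powr_tendsto_0:
  assumes "0 < a"
  shows "(\<lambda>n. ramp_over_powr a (real (Suc n) * y)) \<longlonglongrightarrow> 0"
proof (cases "y = 0")
  case True
  then show ?thesis by (simp add: ramp_over_powr_def)
next
  case False
  have "ramp_over_powr a (real (Suc n) * y)
      = (real (Suc n) powr (- a) * ramp a (real (Suc n) * y)) / \<bar>y\<bar> powr a" for n
    using weight_mult_ramp_over_powr[where c="real (Suc n)" and y=y and a=a] False
    by (simp add: field_simps)
  then show ?thesis
    using tendsto_divide_zero[OF Suc_powr_neg_mult_ramp_tendsto_0[OF assms, of y]] by simp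
qed

lemma cutoff_tendsto:
  assumes "0 < a"
  shows "(\<lambda>n. cutoff a (real (Suc n) * y)) \<longlonglongrightarrow> (if 0 < y then 1 else 0)"
  using tendsto_diff[OF ramp_0_tendsto ramp_over_powr_tendsto_0[OF assms]] by (simp add: cutoff_def)

section \<open>Test functions modulated in the first variable\<close>

lemma smooth_fun_compose_fst:
  fixes \<theta> :: "real \<Rightarrow> real"
  assumes "smooth_fun \<theta>"
  shows "smooth_fun (\<lambda>x::real \<times> 'b::real_normed_vector. \<theta> (c * fst x))"
proof -
  have "bounded_linear (\<lambda>x::real \<times> 'b. c * fst x)"
    by (rule bounded_linear_compose[OF bounded_linear_mult_right bounded_linear_fst])
  from smooth_fun_compose_affine[OF assms this, of 0] show ?thesis by simp
qed

lemma test_fun_mult_smooth: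
  assumes "test_fun \<Omega> \<psi>" "smooth_fun \<phi>"
  shows "test_fun \<Omega> (\<lambda>x. \<psi> x * \<phi> x)"
proof -
  have \<psi>: "smooth_fun \<psi>" "compact (closure {x. \<psi> x \<noteq> 0})" "closure {x. \<psi> x \<noteq> 0} \<subseteq> \<Omega>"
    using assms(1) unfolding test_fun_def by auto
  have sub: "closure {x. \<psi> x * \<phi> x \<noteq> 0} \<subseteq> closure {x. \<psi> x \<noteq> 0}"
    by (rule closure_mono) auto
  then have "compact (closure {x. \<psi> x * \<phi> x \<noteq> 0})"
    using compact_Int_closed[OF \<psi>(2) closed_closure, of "{x. \<psi> x * \<phi> x \<noteq> 0}"]
    by (simp add: Int_absorb1)
  then show ?thesis
    unfolding test_fun_def using smooth_fun_mult[OF \<psi>(1) assms(2)] sub \<psi>(3) by auto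
qed

lemma frechet_derivative_eq_0_outside_support:
  assumes "x \<notin> closure {x. \<psi> x \<noteq> 0}"
  shows "frechet_derivative \<psi> (at x) = (\<lambda>v. 0)"
proof -
  have "(\<psi> has_derivative (\<lambda>v. 0)) (at x)"
  proof (rule has_derivative_transform_within_open[OF has_derivative_const, where s="- closure {x. \<psi> x \<noteq> 0}"])
    show "0 = \<psi> y" if "y \<in> - closure {x. \<psi> x \<noteq> 0}" for y
      using that closure_subset[of "{x. \<psi> x \<noteq> 0}"] by auto
  qed (use assms in auto)
  then show ?thesis by (rule frechet_derivative_at[symmetric])
qed

lemma frechet_derivative_mult_compose_fst:
  fixes \<theta> :: "real \<Rightarrow> real" and \<psi> :: "real \<times> 'b::real_normed_vector \<Rightarrow> real"
  assumes "smooth_fun \<psi>" "smooth_fun \<theta>"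
  shows "frechet_derivative (\<lambda>x. \<psi> x * \<theta> (c * fst x)) (at x) =
    (\<lambda>v. \<psi> x * (deriv \<theta> (c * fst x) * (c * fst v)) + frechet_derivative \<psi> (at x) v * \<theta> (c * fst x))"
proof -
  have inner: "((\<lambda>x::real \<times> 'b. c * fst x) has_derivative (\<lambda>v. c * fst v)) (at x)"
    by (intro bounded_linear_imp_has_derivative bounded_linear_compose[OF bounded_linear_mult_right
          bounded_linear_fst])
  have "(\<theta> has_derivative (\<lambda>u. deriv \<theta> (c * fst x) * u)) (at (c * fst x))"
    using smooth_fun_real_has_deriv[OF assms(2)] by (simp add: has_field_derivative_def)
  from has_derivative_compose[OF inner this]
  have "((\<lambda>x. \<theta> (c * fst x)) has_derivative (\<lambda>v. deriv \<theta> (c * fst x) * (c * fst v))) (at x)"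
    by (simp add: o_def)
  from has_derivative_mult[OF smooth_fun_has_derivative[OF assms(1)] this]
  show ?thesis by (rule frechet_derivative_at[symmetric])
qed

lemma dx1_mult_compose_fst:
  fixes \<theta> :: "real \<Rightarrow> real" and \<psi> :: "'m::finite pt \<Rightarrow> real"
  assumes "smooth_fun \<psi>" "smooth_fun \<theta>"
  shows "dx1 (\<lambda>x. \<psi> x * \<theta> (c * fst x)) x = \<psi> x * deriv \<theta> (c * fst x) * c + dx1 \<psi> x * \<theta> (c * fst x)"
  unfolding dx1_def frechet_derivative_mult_compose_fst[OF assms] by simp

lemma dy_mult_compose_fst:
  fixes \<theta> :: "real \<Rightarrow> real" and \<psi> :: "'m::finite pt \<Rightarrow> real"
  assumes "smooth_fun \<psi>" "smooth_fun \<theta>"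
  shows "dy j (\<lambda>x. \<psi> x * \<theta> (c * fst x)) x = dy j \<psi> x * \<theta> (c * fst x)"
  unfolding dy_def frechet_derivative_mult_compose_fst[OF assms] by simp

lemma dx1_weighted_mult_compose_fst:
  fixes \<theta> :: "real \<Rightarrow> real" and \<psi> :: "'m::finite pt \<Rightarrow> real"
  assumes "smooth_fun \<psi>" "smooth_fun \<theta>"
  shows "dx1_weighted \<alpha> (\<lambda>x. \<psi> x * \<theta> (c * fst x)) x
    = \<theta> (c * fst x) * dx1_weighted \<alpha> \<psi> x + \<bar>fst x\<bar> powr \<alpha> * \<psi> x * deriv \<theta> (c * fst x) * c"
  unfolding dx1_weighted_def dx1_mult_compose_fst[OF assms] by (simp add: algebra_simps)

lemma dx1_weighted_mult_cutoff:
  fixes \<psi> :: "'m::finite pt \<Rightarrow> real"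
  assumes "smooth_fun \<psi>" "c \<noteq> 0"
  shows "dx1_weighted \<alpha> (\<lambda>x. \<psi> x * cutoff \<alpha> (c * fst x)) x
    = ramp 0 (c * fst x) * dx1_weighted \<alpha> \<psi> x - \<bar>c\<bar> powr (- \<alpha>) * ramp \<alpha> (c * fst x) * dx1 \<psi> x"
proof -
  define y where "y = fst x"
  have dcutoff: "deriv (cutoff \<alpha>) s = deriv (ramp 0) s - deriv (ramp_over_powr \<alpha>) s" for s
    unfolding cutoff_def[abs_def]
    by (intro DERIV_imp_deriv DERIV_diff smooth_fun_real_has_deriv smooth_fun_ramp
        smooth_fun_ramp_over_powr)
  have "dx1_weighted \<alpha> (\<lambda>x. \<psi> x * cutoff \<alpha> (c * fst x)) x
    = ramp 0 (c * y) * dx1_weighted \<alpha> \<psi> x - (\<bar>y\<bar> powr \<alpha> * ramp_over_powr \<alpha> (c * y)) * dx1 \<psi> x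
      - \<psi> x * (\<alpha> * sgn y * \<bar>y\<bar> powr (\<alpha> - 1) * ramp_over_powr \<alpha> (c * y)
          + \<bar>y\<bar> powr \<alpha> * deriv (ramp_over_powr \<alpha>) (c * y) * c - \<bar>y\<bar> powr \<alpha> * deriv (ramp 0) (c * y) * c)"
    unfolding dx1_weighted_mult_compose_fst[OF assms(1) smooth_fun_cutoff] y_def dcutoff
    by (simp add: cutoff_def dx1_weighted_def algebra_simps)
  also have "\<dots> = ramp 0 (c * y) * dx1_weighted \<alpha> \<psi> x - \<bar>c\<bar> powr (- \<alpha>) * ramp \<alpha> (c * y) * dx1 \<psi> x"
    by (simp add: weight_mult_ramp_over_powr[OF assms(2)] weight_ramp_over_powr_deriv[OF assms(2)])
  finally show ?thesis unfolding y_def .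
qed

section \<open>Integration\<close>

lemma borel_measurable_lebesgue_if_continuous:
  fixes f :: "'a::euclidean_space \<Rightarrow> real"
  shows "continuous_on UNIV f \<Longrightarrow> f \<in> borel_measurable lebesgue"
  by (metis measurable_completion borel_measurable_continuous_onI measurable_lborel2)

lemma borel_measurable_compose_fst:
  fixes \<theta> :: "real \<Rightarrow> real"
  assumes "continuous_on UNIV \<theta>"
  shows "(\<lambda>x::'m::finite pt. \<theta> (c * fst x)) \<in> borel_measurable lebesgue"
  by (rule borel_measurable_lebesgue_if_continuous)
    (intro continuous_on_compose2[OF assms] continuous_intros, auto)

lemma borel_measurable_ramp_scaled:
  "(\<lambda>x::'m::finite pt. ramp a (r * (\<sigma> * fst x))) \<in> borel_measurable lebesgue"
  using borel_measurable_compose_fst[OF smooth_fun_continuous_on[OF smooth_fun_ramp], of a "r * \<sigma>"]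
  by (simp add: mult.assoc)

lemma borel_measurable_cutoff_scaled:
  "(\<lambda>x::'m::finite pt. cutoff a (r * (\<sigma> * fst x))) \<in> borel_measurable lebesgue"
  using borel_measurable_compose_fst[OF smooth_fun_continuous_on[OF smooth_fun_cutoff], of a "r * \<sigma>"]
  by (simp add: mult.assoc)

lemma set_borel_measurable_scaleR:
  fixes f :: "'a \<Rightarrow> 'b::euclidean_space"
  assumes "set_borel_measurable M A f" "g \<in> borel_measurable M"
  shows "set_borel_measurable M A (\<lambda>x. g x *\<^sub>R f x)"
proof -
  have "(\<lambda>x. g x *\<^sub>R (indicator A x *\<^sub>R f x)) \<in> borel_measurable M"
    by (rule borel_measurable_scaleR[OF assms(2) assms(1)[unfolded set_borel_measurable_def]])
  then show ?thesis unfolding set_borel_measurable_def by (simp add: ac_simps)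
qed

lemma set_integrable_bounded_mult:
  fixes f g :: "'a \<Rightarrow> real"
  assumes f: "set_integrable M A f" and g: "g \<in> borel_measurable M"
    and bound: "\<And>x. x \<in> A \<Longrightarrow> \<bar>g x\<bar> \<le> C"
  shows "set_integrable M A (\<lambda>x. g x * f x)"
proof (rule set_integrable_bound[OF set_integrable_mult_right[OF set_integrable_abs[OF f], of C]])
  have "(\<lambda>x. g x * (indicator A x *\<^sub>R f x)) \<in> borel_measurable M"
    using borel_measurable_integrable[OF f[unfolded set_integrable_def]] g by simp
  then show "set_borel_measurable M A (\<lambda>x. g x * f x)"
    unfolding set_borel_measurable_def by (simp add: mult.left_commute)
  have "\<bar>g x\<bar> * \<bar>f x\<bar> \<le> \<bar>C\<bar> * \<bar>f x\<bar>" if "x \<in> A" for x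
    using bound[OF that] by (intro mult_right_mono) auto
  then show "AE x in M. x \<in> A \<longrightarrow> norm (g x * f x) \<le> norm (C * \<bar>f x\<bar>)"
    by (intro AE_I2) (simp add: abs_mult)
qed

lemma set_integral_bounded_mult_tendsto:
  fixes a :: "nat \<Rightarrow> 'a \<Rightarrow> real" and G :: "'a \<Rightarrow> real"
  assumes G: "set_integrable M A G" and meas: "\<And>n. a n \<in> borel_measurable M"
    and bound: "\<And>n x. x \<in> A \<Longrightarrow> \<bar>a n x\<bar> \<le> C"
    and lim: "\<And>x. x \<in> A \<Longrightarrow> (\<lambda>n. a n x) \<longlonglongrightarrow> a' x"
  shows "(\<lambda>n. LINT x:A|M. a n x * G x) \<longlonglongrightarrow> (LINT x:A|M. a' x * G x)"
  unfolding set_lebesgue_integral_def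
proof (rule integral_dominated_convergence[where w="\<lambda>x. C * norm (indicator A x *\<^sub>R G x)"])
  have GM: "(\<lambda>x. indicator A x *\<^sub>R G x) \<in> borel_measurable M"
    using borel_measurable_integrable[OF G[unfolded set_integrable_def]] .
  show meas_n: "(\<lambda>x. indicator A x *\<^sub>R (a n x * G x)) \<in> borel_measurable M" for n
    using borel_measurable_times[OF meas GM] by (simp add: mult.left_commute)
  have pointwise: "(\<lambda>n. indicator A x *\<^sub>R (a n x * G x)) \<longlonglongrightarrow> indicator A x *\<^sub>R (a' x * G x)" for x
    by (cases "x \<in> A") (simp_all add: lim tendsto_mult_right)
  then show "(\<lambda>x. indicator A x *\<^sub>R (a' x * G x)) \<in> borel_measurable M"
    by (rule borel_measurable_LIMSEQ_real[OF _ meas_n])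
  show "AE x in M. (\<lambda>n. indicator A x *\<^sub>R (a n x * G x)) \<longlonglongrightarrow> indicator A x *\<^sub>R (a' x * G x)"
    using pointwise by simp
  show "integrable M (\<lambda>x. C * norm (indicator A x *\<^sub>R G x))"
    using G unfolding set_integrable_def by simp
  show "AE x in M. norm (indicator A x *\<^sub>R (a n x * G x)) \<le> C * norm (indicator A x *\<^sub>R G x)" for n
    using bound by (intro AE_I2) (auto simp: indicator_def abs_mult intro: mult_right_mono)
qed

lemma set_integrable_loc_integrable_mult:
  fixes f g :: "'m::finite pt \<Rightarrow> real"
  assumes f: "loc_integrable \<Omega> f" and K: "compact K" "K \<subseteq> \<Omega>"
    and g: "continuous_on UNIV g" "\<And>x. x \<notin> K \<Longrightarrow> g x = 0"
  shows "set_integrable lebesgue \<Omega> (\<lambda>x. f x * g x)"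
proof -
  obtain C where C: "\<And>x. x \<in> K \<Longrightarrow> \<bar>g x\<bar> \<le> C"
    using compact_imp_bounded[OF compact_continuous_image[OF continuous_on_subset[OF g(1)] K(1)]]
    unfolding bounded_real by auto
  have "set_integrable lebesgue K (\<lambda>x. g x * f x)"
    using f K by (intro set_integrable_bounded_mult[OF _ borel_measurable_lebesgue_if_continuous[OF g(1)] C])
      (auto simp: loc_integrable_def)
  moreover have "(\<lambda>x. indicator K x *\<^sub>R (g x * f x)) = (\<lambda>x. indicator \<Omega> x *\<^sub>R (f x * g x))"
    using K(2) g(2) by (auto simp: indicator_def fun_eq_iff)
  ultimately show ?thesis unfolding set_integrable_def by simp
qed

lemma set_integrable_mult_dx1:
  fixes f \<psi> :: "'m::finite pt \<Rightarrow> real"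
  assumes "loc_integrable \<Omega> f" "test_fun \<Omega> \<psi>"
  shows "set_integrable lebesgue \<Omega> (\<lambda>x. f x * dx1 \<psi> x)"
proof (rule set_integrable_loc_integrable_mult[OF assms(1)])
  show "compact (closure {x. \<psi> x \<noteq> 0})" "closure {x. \<psi> x \<noteq> 0} \<subseteq> \<Omega>"
    using assms(2) by (auto simp: test_fun_def)
  show "continuous_on UNIV (dx1 \<psi>)"
    using assms(2) unfolding test_fun_def dx1_def[abs_def]
    by (blast intro: smooth_fun_continuous_on smooth_fun_frechet_derivative)
  show "dx1 \<psi> x = 0" if "x \<notin> closure {x. \<psi> x \<noteq> 0}" for x
    by (simp add: dx1_def frechet_derivative_eq_0_outside_support[OF that])
qed

lemma ind_eq_indicator: "ind S = indicator S"
  by (auto simp: ind_def indicator_def)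

lemma open_half_space:
  fixes \<Omega> :: "(real \<times> 'b::topological_space) set"
  assumes "open \<Omega>"
  shows "open (\<Omega> \<inter> {x. 0 < \<sigma> * fst x})"
proof -
  have "open {x::real \<times> 'b. 0 < \<sigma> * fst x}"
    by (rule open_Collect_less) (auto intro!: continuous_intros)
  then show ?thesis using assms by blast
qed

lemma hyperplane_fst_eq_0_null:
  "{x::real \<times> 'b::euclidean_space. fst x = 0} \<in> null_sets lebesgue"
proof -
  have "(1::real, 0::'b) \<in> Basis" by (simp add: Basis_prod_def)
  then have "negligible {x::real \<times> 'b. x \<bullet> (1, 0) = 0}"
    by (rule negligible_standard_hyperplane)
  moreover have "{x::real \<times> 'b. x \<bullet> (1, 0) = 0} = {x. fst x = 0}"
    by (auto simp: inner_prod_def)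
  ultimately show ?thesis by (simp add: negligible_iff_null_sets)
qed

lemma set_integral_split_half_spaces:
  fixes F :: "'m::finite pt \<Rightarrow> real"
  assumes \<Omega>: "\<Omega> \<in> sets lebesgue" and F: "set_integrable lebesgue \<Omega> F"
  shows "(LINT x:\<Omega>|lebesgue. ind (Omega_plus \<Omega>) x * F x) + (LINT x:\<Omega>|lebesgue. ind (Omega_minus \<Omega>) x * F x)
    = (LINT x:\<Omega>|lebesgue. F x)"
proof -
  have "open {x::'m pt. 0 < fst x}" "open {x::'m pt. fst x < 0}"
    using open_half_space[OF open_UNIV, of 1] open_half_space[OF open_UNIV, of "-1"] by auto
  then have "Omega_plus \<Omega> \<in> sets lebesgue" "Omega_minus \<Omega> \<in> sets lebesgue"
    unfolding Omega_plus_def Omega_minus_def using \<Omega> by auto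
  then have int: "set_integrable lebesgue \<Omega> (\<lambda>x. ind (Omega_plus \<Omega>) x * F x)"
      "set_integrable lebesgue \<Omega> (\<lambda>x. ind (Omega_minus \<Omega>) x * F x)"
    by (auto intro!: set_integrable_bounded_mult[OF F, where C=1] simp: ind_eq_indicator)
  have "AE x in lebesgue. x \<notin> {x::'m pt. fst x = 0}"
    by (rule AE_not_in[OF hyperplane_fst_eq_0_null])
  then have "AE x in lebesgue. indicator \<Omega> x *\<^sub>R (ind (Omega_plus \<Omega>) x * F x + ind (Omega_minus \<Omega>) x * F x)
      = indicator \<Omega> x *\<^sub>R F x"
    by eventually_elim (auto simp: ind_def Omega_plus_def Omega_minus_def split: split_indicator)
  then have "(LINT x:\<Omega>|lebesgue. ind (Omega_plus \<Omega>) x * F x + ind (Omega_minus \<Omega>) x * F x)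
      = (LINT x:\<Omega>|lebesgue. F x)"
    unfolding set_lebesgue_integral_def
    by (rule integral_cong_AE[rotated 2])
      (use set_integral_add(1)[OF int] F in \<open>auto simp: set_integrable_def intro: borel_measurable_integrable\<close>)
  then show ?thesis by (simp add: set_integral_add(2)[OF int])
qed

section \<open>Restriction of weak A-gradients to half-spaces\<close>

lemma weak_A_gradD:
  assumes "weak_A_grad \<alpha> \<beta> \<Omega> f D1 Dy" "test_fun \<Omega> \<psi>"
  shows "set_integrable lebesgue \<Omega> (\<lambda>x. f x * dx1_weighted \<alpha> \<psi> x)"
    and "set_integrable lebesgue \<Omega> (\<lambda>x. \<bar>fst x\<bar> powr \<alpha> * D1 x * \<psi> x)"
    and "(LINT x:\<Omega>|lebesgue. f x * dx1_weighted \<alpha> \<psi> x)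
          = - (LINT x:\<Omega>|lebesgue. \<bar>fst x\<bar> powr \<alpha> * D1 x * \<psi> x)"
    and "set_integrable lebesgue \<Omega> (\<lambda>x. f x * \<bar>fst x\<bar> powr \<beta> j * dy j \<psi> x)"
    and "set_integrable lebesgue \<Omega> (\<lambda>x. \<bar>fst x\<bar> powr \<beta> j * Dy x $ j * \<psi> x)"
    and "(LINT x:\<Omega>|lebesgue. f x * \<bar>fst x\<bar> powr \<beta> j * dy j \<psi> x)
          = - (LINT x:\<Omega>|lebesgue. \<bar>fst x\<bar> powr \<beta> j * Dy x $ j * \<psi> x)"
  using assms(1)[unfolded weak_A_grad_def, THEN conjunct2, THEN conjunct2, rule_format, OF assms(2)]
  by auto

lemma weak_A_grad_measurable:
  assumes "weak_A_grad \<alpha> \<beta> \<Omega> f D1 Dy"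
  shows "set_borel_measurable lebesgue \<Omega> D1" "set_borel_measurable lebesgue \<Omega> Dy"
  using assms unfolding weak_A_grad_def by auto

context
  fixes \<alpha> \<sigma> :: real and \<Omega> :: "'m::finite pt set" and G :: "'m pt \<Rightarrow> real"
  assumes G: "set_integrable lebesgue \<Omega> G"
begin

lemma set_integral_ramp_0_tendsto:
  "(\<lambda>n. LINT x:\<Omega>|lebesgue. ramp 0 (real (Suc n) * (\<sigma> * fst x)) * G x)
    \<longlonglongrightarrow> (LINT x:\<Omega>|lebesgue. ind (\<Omega> \<inter> {x. 0 < \<sigma> * fst x}) x * G x)"
  using ramp_0_tendsto ramp_0_2 abs_ramp_le[of 0]
  by (intro set_integral_bounded_mult_tendsto[OF G borel_measurable_ramp_scaled]) (auto simp: ind_def)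

lemma set_integral_cutoff_tendsto:
  assumes "0 < \<alpha>"
  shows "(\<lambda>n. LINT x:\<Omega>|lebesgue. cutoff \<alpha> (real (Suc n) * (\<sigma> * fst x)) * G x)
    \<longlonglongrightarrow> (LINT x:\<Omega>|lebesgue. ind (\<Omega> \<inter> {x. 0 < \<sigma> * fst x}) x * G x)"
  using cutoff_tendsto[OF assms] abs_cutoff_le assms
  by (intro set_integral_bounded_mult_tendsto[OF G borel_measurable_cutoff_scaled, where C="1 + ramp \<alpha> 2"])
    (auto simp: ind_def)

lemma set_integral_Suc_powr_neg_mult_ramp_tendsto_0:
  assumes "0 < \<alpha>"
  shows "(\<lambda>n. LINT x:\<Omega>|lebesgue. (real (Suc n) powr (- \<alpha>) * ramp \<alpha> (real (Suc n) * (\<sigma> * fst x))) * G x)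
    \<longlonglongrightarrow> 0"
  using set_integral_bounded_mult_tendsto[OF G
      borel_measurable_times[OF borel_measurable_const borel_measurable_ramp_scaled]
      abs_Suc_powr_neg_mult_ramp_le Suc_powr_neg_mult_ramp_tendsto_0[OF assms]] assms
  by simp

end

lemma weak_identity_x_restrict_half_space:
  fixes f D1 \<psi> :: "'m::finite pt \<Rightarrow> real" and Dy :: "'m pt \<Rightarrow> real^'m"
  assumes \<alpha>: "0 < \<alpha>" and f: "loc_integrable \<Omega> f" and grad: "weak_A_grad \<alpha> \<beta> \<Omega> f D1 Dy"
    and \<sigma>: "\<bar>\<sigma>\<bar> = 1" and \<psi>: "test_fun \<Omega> \<psi>"
  defines "S \<equiv> \<Omega> \<inter> {x. 0 < \<sigma> * fst x}"
  shows "(LINT x:\<Omega>|lebesgue. f x * ind S x * dx1_weighted \<alpha> \<psi> x)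
    = - (LINT x:\<Omega>|lebesgue. \<bar>fst x\<bar> powr \<alpha> * (D1 x * ind S x) * \<psi> x)"
proof -
  define c where "c n = real (Suc n) * \<sigma>" for n
  define \<phi> where "\<phi> n x = \<psi> x * cutoff \<alpha> (c n * fst x)" for n x
  have c: "c n \<noteq> 0" "\<bar>c n\<bar> = real (Suc n)" "c n * y = real (Suc n) * (\<sigma> * y)" for n y
    using \<sigma> by (auto simp: c_def abs_mult)
  have \<phi>: "test_fun \<Omega> (\<phi> n)" for n
    unfolding \<phi>_def using test_fun_mult_smooth[OF \<psi> smooth_fun_compose_fst[OF smooth_fun_cutoff]] .
  note grad_\<psi> = weak_A_gradD[OF grad \<psi>] and grad_\<phi> = weak_A_gradD[OF grad \<phi>]
  let ?A = "\<lambda>n x. ramp 0 (real (Suc n) * (\<sigma> * fst x)) * (f x * dx1_weighted \<alpha> \<psi> x)"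
  let ?B = "\<lambda>n x. (real (Suc n) powr (- \<alpha>) * ramp \<alpha> (real (Suc n) * (\<sigma> * fst x))) * (f x * dx1 \<psi> x)"
  have "dx1_weighted \<alpha> (\<phi> n) x
      = ramp 0 (c n * fst x) * dx1_weighted \<alpha> \<psi> x - \<bar>c n\<bar> powr (- \<alpha>) * ramp \<alpha> (c n * fst x) * dx1 \<psi> x"
    for n x
    unfolding \<phi>_def using \<psi> by (intro dx1_weighted_mult_cutoff c(1)) (simp add: test_fun_def)
  then have "f x * dx1_weighted \<alpha> (\<phi> n) x = ?A n x - ?B n x" for n x
    by (simp only: c(2,3)) (simp add: algebra_simps)
  moreover have "set_integrable lebesgue \<Omega> (?A n)" for n
    by (rule set_integrable_bounded_mult[OF grad_\<psi>(1) borel_measurable_ramp_scaled abs_ramp_le])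
  moreover have "set_integrable lebesgue \<Omega> (?B n)" for n
    using \<alpha> by (intro set_integrable_bounded_mult[OF set_integrable_mult_dx1[OF f \<psi>]
        borel_measurable_times[OF borel_measurable_const borel_measurable_ramp_scaled]
        abs_Suc_powr_neg_mult_ramp_le]) simp
  ultimately have "(LINT x:\<Omega>|lebesgue. f x * dx1_weighted \<alpha> (\<phi> n) x)
      = (LINT x:\<Omega>|lebesgue. ?A n x) - (LINT x:\<Omega>|lebesgue. ?B n x)" for n
    by (simp add: set_integral_diff)
  then have "(\<lambda>n. LINT x:\<Omega>|lebesgue. f x * dx1_weighted \<alpha> (\<phi> n) x)
      \<longlonglongrightarrow> (LINT x:\<Omega>|lebesgue. ind S x * (f x * dx1_weighted \<alpha> \<psi> x)) - 0"
    unfolding S_def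
    using tendsto_diff[OF set_integral_ramp_0_tendsto[OF grad_\<psi>(1)]
        set_integral_Suc_powr_neg_mult_ramp_tendsto_0[OF set_integrable_mult_dx1[OF f \<psi>] \<alpha>]]
    by simp
  moreover have "(\<lambda>x. \<bar>fst x\<bar> powr \<alpha> * D1 x * \<phi> n x)
      = (\<lambda>x. cutoff \<alpha> (real (Suc n) * (\<sigma> * fst x)) * (\<bar>fst x\<bar> powr \<alpha> * D1 x * \<psi> x))" for n
    by (simp add: \<phi>_def c fun_eq_iff)
  then have "(\<lambda>n. - (LINT x:\<Omega>|lebesgue. \<bar>fst x\<bar> powr \<alpha> * D1 x * \<phi> n x))
      \<longlonglongrightarrow> - (LINT x:\<Omega>|lebesgue. ind S x * (\<bar>fst x\<bar> powr \<alpha> * D1 x * \<psi> x))"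
    unfolding S_def using set_integral_cutoff_tendsto[OF grad_\<psi>(2) \<alpha>] by (intro tendsto_minus) simp
  ultimately show ?thesis
    using grad_\<phi>(3) LIMSEQ_unique by (simp add: ac_simps)
qed

lemma weak_identity_y_restrict_half_space:
  fixes f D1 \<psi> :: "'m::finite pt \<Rightarrow> real" and Dy :: "'m pt \<Rightarrow> real^'m" and \<sigma> :: real
  assumes grad: "weak_A_grad \<alpha> \<beta> \<Omega> f D1 Dy" and \<psi>: "test_fun \<Omega> \<psi>"
  defines "S \<equiv> \<Omega> \<inter> {x. 0 < \<sigma> * fst x}"
  shows "(LINT x:\<Omega>|lebesgue. f x * ind S x * \<bar>fst x\<bar> powr \<beta> j * dy j \<psi> x)
    = - (LINT x:\<Omega>|lebesgue. \<bar>fst x\<bar> powr \<beta> j * (ind S x *\<^sub>R Dy x) $ j * \<psi> x)"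
proof -
  define \<phi> where "\<phi> n x = \<psi> x * ramp 0 ((real (Suc n) * \<sigma>) * fst x)" for n x
  have \<phi>: "test_fun \<Omega> (\<phi> n)" for n
    unfolding \<phi>_def using test_fun_mult_smooth[OF \<psi> smooth_fun_compose_fst[OF smooth_fun_ramp]] .
  note grad_\<psi> = weak_A_gradD[OF grad \<psi>] and grad_\<phi> = weak_A_gradD[OF grad \<phi>]
  have "(\<lambda>x. f x * \<bar>fst x\<bar> powr \<beta> j * dy j (\<phi> n) x)
      = (\<lambda>x. ramp 0 (real (Suc n) * (\<sigma> * fst x)) * (f x * \<bar>fst x\<bar> powr \<beta> j * dy j \<psi> x))" for n
  proof -
    have "dy j (\<phi> n) x = dy j \<psi> x * ramp 0 ((real (Suc n) * \<sigma>) * fst x)" for x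
      using \<psi> unfolding \<phi>_def test_fun_def by (intro dy_mult_compose_fst smooth_fun_ramp) simp
    then show ?thesis by (simp add: fun_eq_iff ac_simps)
  qed
  then have "(\<lambda>n. LINT x:\<Omega>|lebesgue. f x * \<bar>fst x\<bar> powr \<beta> j * dy j (\<phi> n) x)
      \<longlonglongrightarrow> (LINT x:\<Omega>|lebesgue. ind S x * (f x * \<bar>fst x\<bar> powr \<beta> j * dy j \<psi> x))"
    unfolding S_def using set_integral_ramp_0_tendsto[OF grad_\<psi>(4)] by simp
  moreover have "(\<lambda>x. \<bar>fst x\<bar> powr \<beta> j * Dy x $ j * \<phi> n x)
      = (\<lambda>x. ramp 0 (real (Suc n) * (\<sigma> * fst x)) * (\<bar>fst x\<bar> powr \<beta> j * Dy x $ j * \<psi> x))" for n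
    by (simp add: \<phi>_def fun_eq_iff mult.assoc mult.left_commute)
  then have "(\<lambda>n. - (LINT x:\<Omega>|lebesgue. \<bar>fst x\<bar> powr \<beta> j * Dy x $ j * \<phi> n x))
      \<longlonglongrightarrow> - (LINT x:\<Omega>|lebesgue. ind S x * (\<bar>fst x\<bar> powr \<beta> j * Dy x $ j * \<psi> x))"
    unfolding S_def using set_integral_ramp_0_tendsto[OF grad_\<psi>(5)] by (intro tendsto_minus) simp
  ultimately show ?thesis
    using grad_\<phi>(6) LIMSEQ_unique by (simp add: ac_simps)
qed

lemma weak_A_grad_restrict_half_space:
  fixes f D1 :: "'m::finite pt \<Rightarrow> real" and Dy :: "'m pt \<Rightarrow> real^'m" and \<sigma> :: real
  assumes \<alpha>: "0 < \<alpha>" and \<Omega>: "open \<Omega>" and f: "loc_integrable \<Omega> f"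
    and grad: "weak_A_grad \<alpha> \<beta> \<Omega> f D1 Dy" and \<sigma>: "\<bar>\<sigma>\<bar> = 1"
  defines "S \<equiv> \<Omega> \<inter> {x. 0 < \<sigma> * fst x}"
  shows "weak_A_grad \<alpha> \<beta> \<Omega> (\<lambda>x. f x * ind S x) (\<lambda>x. D1 x * ind S x) (\<lambda>x. ind S x *\<^sub>R Dy x)"
  unfolding weak_A_grad_def
proof (intro conjI allI impI)
  have "S \<in> sets lebesgue"
    using open_half_space[OF \<Omega>] by (simp add: S_def)
  then have ind: "ind S \<in> borel_measurable lebesgue" "\<bar>ind S x\<bar> \<le> 1" for x
    by (simp_all add: ind_eq_indicator)
  note meas = weak_A_grad_measurable[OF grad]
  show "set_borel_measurable lebesgue \<Omega> (\<lambda>x. D1 x * ind S x)"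
    using set_borel_measurable_scaleR[OF meas(1) ind(1)] by (simp add: mult.commute)
  show "set_borel_measurable lebesgue \<Omega> (\<lambda>x. ind S x *\<^sub>R Dy x)"
    by (rule set_borel_measurable_scaleR[OF meas(2) ind(1)])
  fix \<psi> j
  assume \<psi>: "test_fun \<Omega> \<psi>"
  note grad_\<psi> = weak_A_gradD[OF grad \<psi>]
  show "set_integrable lebesgue \<Omega> (\<lambda>x. f x * ind S x * dx1_weighted \<alpha> \<psi> x)"
    using set_integrable_bounded_mult[OF grad_\<psi>(1) ind] by (simp add: ac_simps)
  show "set_integrable lebesgue \<Omega> (\<lambda>x. \<bar>fst x\<bar> powr \<alpha> * (D1 x * ind S x) * \<psi> x)"
    using set_integrable_bounded_mult[OF grad_\<psi>(2) ind] by (simp add: ac_simps)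
  show "set_integrable lebesgue \<Omega> (\<lambda>x. f x * ind S x * \<bar>fst x\<bar> powr \<beta> j * dy j \<psi> x)"
    using set_integrable_bounded_mult[OF grad_\<psi>(4) ind] by (simp add: ac_simps)
  show "set_integrable lebesgue \<Omega> (\<lambda>x. \<bar>fst x\<bar> powr \<beta> j * (ind S x *\<^sub>R Dy x) $ j * \<psi> x)"
    using set_integrable_bounded_mult[OF grad_\<psi>(5) ind] by (simp add: ac_simps)
  show "(LINT x:\<Omega>|lebesgue. f x * ind S x * dx1_weighted \<alpha> \<psi> x)
      = - (LINT x:\<Omega>|lebesgue. \<bar>fst x\<bar> powr \<alpha> * (D1 x * ind S x) * \<psi> x)"
    unfolding S_def by (rule weak_identity_x_restrict_half_space[OF \<alpha> f grad \<sigma> \<psi>])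
  show "(LINT x:\<Omega>|lebesgue. f x * ind S x * \<bar>fst x\<bar> powr \<beta> j * dy j \<psi> x)
      = - (LINT x:\<Omega>|lebesgue. \<bar>fst x\<bar> powr \<beta> j * (ind S x *\<^sub>R Dy x) $ j * \<psi> x)"
    unfolding S_def by (rule weak_identity_y_restrict_half_space[OF grad \<psi>])
qed

section \<open>Energy and its derivative\<close>

lemma A_norm_restrict:
  "A_norm \<alpha> \<beta> (\<lambda>x. D1 x * ind S x) (\<lambda>x. ind S x *\<^sub>R Dy x) x = ind S x * A_norm \<alpha> \<beta> D1 Dy x"
  by (cases "x \<in> S") (simp_all add: A_norm_def ind_def)

lemma A_norm_Lp_restrict:
  fixes D1 :: "'m::finite pt \<Rightarrow> real" and Dy :: "'m pt \<Rightarrow> real^'m"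
  assumes "S \<subseteq> \<Omega>" "S \<in> sets lebesgue" "A_norm_Lp p \<alpha> \<beta> \<Omega> D1 Dy"
  shows "A_norm_Lp p \<alpha> \<beta> S (\<lambda>x. D1 x * ind S x) (\<lambda>x. ind S x *\<^sub>R Dy x)"
proof -
  let ?N = "A_norm \<alpha> \<beta> D1 Dy"
  have meas: "(\<lambda>x. indicator \<Omega> x *\<^sub>R ?N x) \<in> borel_measurable lebesgue"
    and int: "integrable lebesgue (\<lambda>x. indicator \<Omega> x *\<^sub>R ?N x powr p)"
    using assms(3) unfolding A_norm_Lp_def set_borel_measurable_def set_integrable_def by auto
  have "(\<lambda>x. indicator S x *\<^sub>R A_norm \<alpha> \<beta> (\<lambda>x. D1 x * ind S x) (\<lambda>x. ind S x *\<^sub>R Dy x) x)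
      = (\<lambda>x. indicator S x *\<^sub>R (indicator \<Omega> x *\<^sub>R ?N x))"
    and "(\<lambda>x. indicator S x *\<^sub>R A_norm \<alpha> \<beta> (\<lambda>x. D1 x * ind S x) (\<lambda>x. ind S x *\<^sub>R Dy x) x powr p)
      = (\<lambda>x. indicator S x *\<^sub>R (indicator \<Omega> x *\<^sub>R ?N x powr p))"
    unfolding A_norm_restrict using assms(1) by (auto simp: fun_eq_iff ind_def split: split_indicator)
  moreover have "(\<lambda>x. indicator S x *\<^sub>R (indicator \<Omega> x *\<^sub>R ?N x)) \<in> borel_measurable lebesgue"
    using borel_measurable_scaleR[OF borel_measurable_indicator[OF assms(2)] meas] .
  moreover have "integrable lebesgue (\<lambda>x. indicator S x *\<^sub>R (indicator \<Omega> x *\<^sub>R ?N x powr p))"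
    by (rule integrable_mult_indicator[OF assms(2) int])
  ultimately show ?thesis
    unfolding A_norm_Lp_def set_borel_measurable_def set_integrable_def by simp
qed

lemma energy_restrict:
  "energy p \<alpha> \<beta> \<Omega> (\<lambda>x. D1 x * ind S x) (\<lambda>x. ind S x *\<^sub>R Dy x)
    = (1 / p) * (LINT x:\<Omega>|lebesgue. ind S x * A_norm \<alpha> \<beta> D1 Dy x powr p)"
proof -
  have "(ind S x * A_norm \<alpha> \<beta> D1 Dy x) powr p = ind S x * A_norm \<alpha> \<beta> D1 Dy x powr p" for x
    by (simp add: ind_def)
  then show ?thesis unfolding energy_def A_norm_restrict by simp
qed

lemma energy_split_half_spaces:
  fixes D1 :: "'m::finite pt \<Rightarrow> real" and Dy :: "'m pt \<Rightarrow> real^'m"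
  assumes "\<Omega> \<in> sets lebesgue" "A_norm_Lp p \<alpha> \<beta> \<Omega> D1 Dy"
  shows "energy p \<alpha> \<beta> \<Omega> D1 Dy =
      energy p \<alpha> \<beta> \<Omega> (\<lambda>x. D1 x * ind (Omega_plus \<Omega>) x) (\<lambda>x. ind (Omega_plus \<Omega>) x *\<^sub>R Dy x)
    + energy p \<alpha> \<beta> \<Omega> (\<lambda>x. D1 x * ind (Omega_minus \<Omega>) x) (\<lambda>x. ind (Omega_minus \<Omega>) x *\<^sub>R Dy x)"
proof -
  have "(LINT x:\<Omega>|lebesgue. ind (Omega_plus \<Omega>) x * A_norm \<alpha> \<beta> D1 Dy x powr p)
      + (LINT x:\<Omega>|lebesgue. ind (Omega_minus \<Omega>) x * A_norm \<alpha> \<beta> D1 Dy x powr p)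
      = (LINT x:\<Omega>|lebesgue. A_norm \<alpha> \<beta> D1 Dy x powr p)"
    using set_integral_split_half_spaces[OF assms(1)] assms(2) unfolding A_norm_Lp_def by blast
  then show ?thesis
    unfolding energy_restrict energy_def by (simp add: add_divide_distrib[symmetric])
qed

definition A_inner :: "real \<Rightarrow> ('m::finite \<Rightarrow> real) \<Rightarrow> ('m pt \<Rightarrow> real) \<Rightarrow> ('m pt \<Rightarrow> real^'m)
    \<Rightarrow> ('m pt \<Rightarrow> real) \<Rightarrow> ('m pt \<Rightarrow> real^'m) \<Rightarrow> 'm pt \<Rightarrow> real" where
  "A_inner \<alpha> \<beta> D1 Dy G1 Gy x =
     \<bar>fst x\<bar> powr \<alpha> * D1 x * G1 x + (\<Sum>j\<in>UNIV. \<bar>fst x\<bar> powr \<beta> j * Dy x $ j * Gy x $ j)"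

lemma abs_A_inner_le:
  fixes D1 G1 :: "'m::finite pt \<Rightarrow> real" and Dy Gy :: "'m pt \<Rightarrow> real^'m"
  shows "\<bar>A_inner \<alpha> \<beta> D1 Dy G1 Gy x\<bar> \<le> A_norm \<alpha> \<beta> D1 Dy x * A_norm \<alpha> \<beta> G1 Gy x"
proof -
  let ?a = "\<bar>fst x\<bar> powr \<alpha>" and ?b = "\<lambda>j. \<bar>fst x\<bar> powr \<beta> j"
  define U :: "'m pt" where "U = (sqrt ?a * D1 x, \<chi> j. sqrt (?b j) * Dy x $ j)"
  define V :: "'m pt" where "V = (sqrt ?a * G1 x, \<chi> j. sqrt (?b j) * Gy x $ j)"
  have sq: "sqrt ?a * sqrt ?a = ?a" "\<And>j. sqrt (?b j) * sqrt (?b j) = ?b j"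
    by (simp_all add: real_sqrt_mult[symmetric])
  have "U \<bullet> V = (sqrt ?a * sqrt ?a) * D1 x * G1 x
      + (\<Sum>j\<in>UNIV. (sqrt (?b j) * sqrt (?b j)) * Dy x $ j * Gy x $ j)"
    unfolding U_def V_def by (simp add: inner_prod_def inner_vec_def algebra_simps)
  then have UV: "U \<bullet> V = A_inner \<alpha> \<beta> D1 Dy G1 Gy x"
    unfolding sq A_inner_def .
  have "U \<bullet> U = (sqrt ?a * sqrt ?a) * (D1 x)\<^sup>2 + (\<Sum>j\<in>UNIV. (sqrt (?b j) * sqrt (?b j)) * (Dy x $ j)\<^sup>2)"
    unfolding U_def by (simp add: inner_prod_def inner_vec_def algebra_simps power2_eq_square)
  then have U: "norm U = A_norm \<alpha> \<beta> D1 Dy x"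
    unfolding sq norm_eq_sqrt_inner A_norm_def by simp
  have "V \<bullet> V = (sqrt ?a * sqrt ?a) * (G1 x)\<^sup>2 + (\<Sum>j\<in>UNIV. (sqrt (?b j) * sqrt (?b j)) * (Gy x $ j)\<^sup>2)"
    unfolding V_def by (simp add: inner_prod_def inner_vec_def algebra_simps power2_eq_square)
  then have V: "norm V = A_norm \<alpha> \<beta> G1 Gy x"
    unfolding sq norm_eq_sqrt_inner A_norm_def by simp
  show ?thesis using Cauchy_Schwarz_ineq2[of U V] unfolding UV U V .
qed

lemma powr_minus_2_mult_le:
  fixes N M p :: real
  assumes "0 \<le> N" "0 \<le> M" "1 \<le> p"
  shows "N powr (p - 2) * (N * M) \<le> N powr p + M powr p"
proof (cases "N = 0")
  case False
  then have N: "0 < N" using assms(1) by simp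
  have "N powr (p - 2) * (N * M) = N powr (p - 1) * M"
    using N by (simp add: powr_diff field_simps power2_eq_square powr_numeral)
  also have "\<dots> \<le> max N M powr (p - 1) * max N M"
    using assms by (intro mult_mono powr_mono2) auto
  also have "\<dots> = max N M powr p"
    using N by (simp add: powr_diff max_def)
  also have "\<dots> \<le> N powr p + M powr p"
    by (simp add: max_def)
  finally show ?thesis .
qed simp

lemma A_norm_nonneg: "0 \<le> A_norm \<alpha> \<beta> D1 Dy x"
  by (auto simp: A_norm_def intro!: add_nonneg_nonneg sum_nonneg)

lemma energy_deriv_eq:
  "energy_deriv p \<alpha> \<beta> \<Omega> D1 Dy G1 Gy
    = (LINT x:\<Omega>|lebesgue. A_norm \<alpha> \<beta> D1 Dy x powr (p - 2) * A_inner \<alpha> \<beta> D1 Dy G1 Gy x)"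
  by (simp add: energy_deriv_def A_inner_def)

lemma abs_energy_deriv_integrand_le:
  fixes D1 G1 :: "'m::finite pt \<Rightarrow> real" and Dy Gy :: "'m pt \<Rightarrow> real^'m"
  assumes "1 \<le> p"
  shows "\<bar>A_norm \<alpha> \<beta> D1 Dy x powr (p - 2) * A_inner \<alpha> \<beta> D1 Dy G1 Gy x\<bar>
    \<le> A_norm \<alpha> \<beta> D1 Dy x powr p + A_norm \<alpha> \<beta> G1 Gy x powr p"
proof -
  have "\<bar>A_norm \<alpha> \<beta> D1 Dy x powr (p - 2) * A_inner \<alpha> \<beta> D1 Dy G1 Gy x\<bar>
      \<le> A_norm \<alpha> \<beta> D1 Dy x powr (p - 2) * (A_norm \<alpha> \<beta> D1 Dy x * A_norm \<alpha> \<beta> G1 Gy x)"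
    by (simp add: abs_mult) (rule mult_left_mono[OF abs_A_inner_le], simp)
  also have "\<dots> \<le> A_norm \<alpha> \<beta> D1 Dy x powr p + A_norm \<alpha> \<beta> G1 Gy x powr p"
    using assms A_norm_nonneg by (intro powr_minus_2_mult_le) simp_all
  finally show ?thesis .
qed

lemma set_integrable_energy_deriv_integrand:
  fixes D1 G1 :: "'m::finite pt \<Rightarrow> real" and Dy Gy :: "'m pt \<Rightarrow> real^'m"
  assumes p: "1 \<le> p" and \<Omega>: "\<Omega> \<in> sets lebesgue"
    and Lp: "A_norm_Lp p \<alpha> \<beta> \<Omega> D1 Dy" "A_norm_Lp p \<alpha> \<beta> \<Omega> G1 Gy"
    and meas: "set_borel_measurable lebesgue \<Omega> D1" "set_borel_measurable lebesgue \<Omega> Dy"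
      "set_borel_measurable lebesgue \<Omega> G1" "set_borel_measurable lebesgue \<Omega> Gy"
  shows "set_integrable lebesgue \<Omega> (\<lambda>x. A_norm \<alpha> \<beta> D1 Dy x powr (p - 2) * A_inner \<alpha> \<beta> D1 Dy G1 Gy x)"
proof (rule set_integrable_bound)
  show "set_integrable lebesgue \<Omega> (\<lambda>x. A_norm \<alpha> \<beta> D1 Dy x powr p + A_norm \<alpha> \<beta> G1 Gy x powr p)"
    using Lp unfolding A_norm_Lp_def by (intro set_integral_add(1)) auto
  let ?M = "restrict_space lebesgue \<Omega>"
  have restrict: "set_borel_measurable lebesgue \<Omega> f \<longleftrightarrow> f \<in> borel_measurable ?M"
    for f :: "'m pt \<Rightarrow> 'b::real_normed_vector"
    using \<Omega> by (simp add: set_borel_measurable_def borel_measurable_restrict_space_iff)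
  have m: "D1 \<in> borel_measurable ?M" "Dy \<in> borel_measurable ?M"
    "G1 \<in> borel_measurable ?M" "Gy \<in> borel_measurable ?M"
    "A_norm \<alpha> \<beta> D1 Dy \<in> borel_measurable ?M"
    using meas Lp(1) unfolding restrict A_norm_Lp_def by auto
  have m_fst: "(\<lambda>x. fst x) \<in> borel_measurable ?M"
    by (rule measurable_restrict_space1)
      (rule borel_measurable_lebesgue_if_continuous, intro continuous_intros)
  have m_nth: "(\<lambda>x. Dy x $ j) \<in> borel_measurable ?M" "(\<lambda>x. Gy x $ j) \<in> borel_measurable ?M" for j
    by (rule measurable_compose[OF m(2) borel_measurable_nth], rule measurable_compose[OF m(4) borel_measurable_nth])
  show "set_borel_measurable lebesgue \<Omega>
      (\<lambda>x. A_norm \<alpha> \<beta> D1 Dy x powr (p - 2) * A_inner \<alpha> \<beta> D1 Dy G1 Gy x)"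
    unfolding restrict A_inner_def
    by (intro borel_measurable_times borel_measurable_add borel_measurable_sum measurable_abs_powr
        powr_real_measurable borel_measurable_const m m_fst m_nth)
  have "norm (A_norm \<alpha> \<beta> D1 Dy x powr (p - 2) * A_inner \<alpha> \<beta> D1 Dy G1 Gy x)
      \<le> norm (A_norm \<alpha> \<beta> D1 Dy x powr p + A_norm \<alpha> \<beta> G1 Gy x powr p)" for x
    using abs_energy_deriv_integrand_le[OF p, of \<alpha> \<beta> D1 Dy x G1 Gy] by simp
  then show "AE x in lebesgue. x \<in> \<Omega> \<longrightarrow> norm (A_norm \<alpha> \<beta> D1 Dy x powr (p - 2) * A_inner \<alpha> \<beta> D1 Dy G1 Gy x)
      \<le> norm (A_norm \<alpha> \<beta> D1 Dy x powr p + A_norm \<alpha> \<beta> G1 Gy x powr p)"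
    by simp
qed

lemma energy_deriv_restrict:
  "energy_deriv p \<alpha> \<beta> \<Omega> (\<lambda>x. D1 x * ind S x) (\<lambda>x. ind S x *\<^sub>R Dy x) G1 Gy
    = (LINT x:\<Omega>|lebesgue. ind S x * (A_norm \<alpha> \<beta> D1 Dy x powr (p - 2) * A_inner \<alpha> \<beta> D1 Dy G1 Gy x))"
proof -
  have "A_norm \<alpha> \<beta> (\<lambda>x. D1 x * ind S x) (\<lambda>x. ind S x *\<^sub>R Dy x) x powr (p - 2)
        * A_inner \<alpha> \<beta> (\<lambda>x. D1 x * ind S x) (\<lambda>x. ind S x *\<^sub>R Dy x) G1 Gy x
      = ind S x * (A_norm \<alpha> \<beta> D1 Dy x powr (p - 2) * A_inner \<alpha> \<beta> D1 Dy G1 Gy x)" for x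
    unfolding A_norm_restrict by (simp add: A_inner_def ind_def)
  then show ?thesis unfolding energy_deriv_eq by simp
qed

lemma energy_deriv_split_half_spaces:
  fixes D1 G1 :: "'m::finite pt \<Rightarrow> real" and Dy Gy :: "'m pt \<Rightarrow> real^'m"
  assumes "1 \<le> p" "\<Omega> \<in> sets lebesgue"
    and "A_norm_Lp p \<alpha> \<beta> \<Omega> D1 Dy" "A_norm_Lp p \<alpha> \<beta> \<Omega> G1 Gy"
    and "set_borel_measurable lebesgue \<Omega> D1" "set_borel_measurable lebesgue \<Omega> Dy"
      "set_borel_measurable lebesgue \<Omega> G1" "set_borel_measurable lebesgue \<Omega> Gy"
  shows "energy_deriv p \<alpha> \<beta> \<Omega> D1 Dy G1 Gy =
      energy_deriv p \<alpha> \<beta> \<Omega> (\<lambda>x. D1 x * ind (Omega_plus \<Omega>) x) (\<lambda>x. ind (Omega_plus \<Omega>) x *\<^sub>R Dy x) G1 Gy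
    + energy_deriv p \<alpha> \<beta> \<Omega> (\<lambda>x. D1 x * ind (Omega_minus \<Omega>) x) (\<lambda>x. ind (Omega_minus \<Omega>) x *\<^sub>R Dy x) G1 Gy"
  unfolding energy_deriv_restrict energy_deriv_eq
  using set_integral_split_half_spaces[OF assms(2) set_integrable_energy_deriv_integrand[OF assms]] by simp

theorem mainTheorem11:
  fixes p \<alpha> :: real and \<beta> :: "'m::finite \<Rightarrow> real" and \<Omega> :: "'m pt set"
  assumes "1 < p"
    and "0 \<le> \<alpha>" and "\<alpha> < 2"
    and "\<forall>j. 0 \<le> \<beta> j"
    and "open \<Omega>" and "\<Omega> \<inter> {x. fst x = 0} \<noteq> {}"
    and "2 / (p / (p - 1)) \<le> \<alpha>"
  shows
    "(\<forall>f D1 Dy. loc_integrable \<Omega> f \<and> weak_A_grad \<alpha> \<beta> \<Omega> f D1 Dy \<and> A_norm_Lp p \<alpha> \<beta> \<Omega> D1 Dy \<longrightarrow>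
        (\<forall>S \<in> {Omega_plus \<Omega>, Omega_minus \<Omega>}.
           weak_A_grad \<alpha> \<beta> \<Omega> (\<lambda>x. f x * ind S x) (\<lambda>x. D1 x * ind S x) (\<lambda>x. ind S x *\<^sub>R Dy x)
         \<and> A_norm_Lp p \<alpha> \<beta> S (\<lambda>x. D1 x * ind S x) (\<lambda>x. ind S x *\<^sub>R Dy x))
      \<and> energy p \<alpha> \<beta> \<Omega> D1 Dy =
          energy p \<alpha> \<beta> \<Omega> (\<lambda>x. D1 x * ind (Omega_plus \<Omega>) x) (\<lambda>x. ind (Omega_plus \<Omega>) x *\<^sub>R Dy x)
        + energy p \<alpha> \<beta> \<Omega> (\<lambda>x. D1 x * ind (Omega_minus \<Omega>) x) (\<lambda>x. ind (Omega_minus \<Omega>) x *\<^sub>R Dy x))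
   \<and> (\<forall>f D1 Dy g G1 Gy.
        loc_integrable \<Omega> f \<and> weak_A_grad \<alpha> \<beta> \<Omega> f D1 Dy \<and> A_norm_Lp p \<alpha> \<beta> \<Omega> D1 Dy \<and>
        loc_integrable \<Omega> g \<and> weak_A_grad \<alpha> \<beta> \<Omega> g G1 Gy \<and> A_norm_Lp p \<alpha> \<beta> \<Omega> G1 Gy \<longrightarrow>
        energy_deriv p \<alpha> \<beta> \<Omega> D1 Dy G1 Gy =
          energy_deriv p \<alpha> \<beta> \<Omega> (\<lambda>x. D1 x * ind (Omega_plus \<Omega>) x) (\<lambda>x. ind (Omega_plus \<Omega>) x *\<^sub>R Dy x) G1 Gy
        + energy_deriv p \<alpha> \<beta> \<Omega> (\<lambda>x. D1 x * ind (Omega_minus \<Omega>) x) (\<lambda>x. ind (Omega_minus \<Omega>) x *\<^sub>R Dy x) G1 Gy)"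
proof -
  have \<alpha>: "0 < \<alpha>"
    using assms(1,7) by (smt (verit) divide_pos_pos)
  have \<Omega>: "\<Omega> \<in> sets lebesgue"
    using assms(5) by simp
  have halves: "Omega_plus \<Omega> = \<Omega> \<inter> {x. 0 < 1 * fst x}" "Omega_minus \<Omega> = \<Omega> \<inter> {x. 0 < (- 1) * fst x}"
    by (auto simp: Omega_plus_def Omega_minus_def)
  have restrict: "weak_A_grad \<alpha> \<beta> \<Omega> (\<lambda>x. f x * ind S x) (\<lambda>x. D1 x * ind S x) (\<lambda>x. ind S x *\<^sub>R Dy x)
      \<and> A_norm_Lp p \<alpha> \<beta> S (\<lambda>x. D1 x * ind S x) (\<lambda>x. ind S x *\<^sub>R Dy x)"
    if "loc_integrable \<Omega> f" "weak_A_grad \<alpha> \<beta> \<Omega> f D1 Dy" "A_norm_Lp p \<alpha> \<beta> \<Omega> D1 Dy"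
      and "S = \<Omega> \<inter> {x. 0 < \<sigma> * fst x}" "\<bar>\<sigma>\<bar> = 1" for f D1 Dy S \<sigma>
    using that weak_A_grad_restrict_half_space[OF \<alpha> assms(5)] open_half_space[OF assms(5)]
    by (auto intro!: A_norm_Lp_restrict)
  have meas: "set_borel_measurable lebesgue \<Omega> D1 \<and> set_borel_measurable lebesgue \<Omega> Dy"
    if "weak_A_grad \<alpha> \<beta> \<Omega> f D1 Dy" for f D1 Dy
    using weak_A_grad_measurable[OF that] by blast
  show ?thesis
    using restrict[OF _ _ _ halves(1)] restrict[OF _ _ _ halves(2)] assms(1) meas
      energy_split_half_spaces[OF \<Omega>] energy_deriv_split_half_spaces[OF _ \<Omega>]
    by auto
qed

end
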